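(* Let $X$ be a positive, finite-valued random variable with probability mass function $p_X$, and let $Y$ be such that conditionally on $\{X=x\}$, $Y\sim\mathrm{Exp}(x)$. Thus $Y$ has density $f_Y(y)=\sum_x p_X(x)\,x e^{-xy}$ for $y\ge0$. Define $$g(t):=E[X\mid Y\ge t]=\frac{\sum_x x e^{-tx}p_X(x)}{\sum_x e^{-tx}p_X(x)},\qquad t\ge0.$$ Consider the stationary continuous-time Poisson channel with feedback described in the context, with input $\{X_t\}_{t\in\mathbb{R}}$ and output $\{Y_t\}_{t\in\mathbb{R}}$. Then: 1. For every $t$ and every $x$, $$P\{X_t=x\}=\frac{(1/x)p_X(x)}{\sum_{x'}(1/x')p_X(x')},$$ and consequently $E[X_t\log X_t]=E[\log X]/E[1/X]$. 2. Let $\ell$ be the time of the most recent output event prior to time $0$, and set $\tau:=-\ell$. Then $\tau$ has density $$f_\tau(t)=\frac{\sum_x e^{-tx}p_X(x)}{E[1/X]},\qquad t\ge0.$$ 3. For $\tau$ distributed as in part 2, $$E[g(\tau)\log g(\tau)]=\frac{1-h(Y)}{E[1/X]},$$ where $h(Y)$ is the differential entropy of $Y$.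
   Context: **The channel.** The output $\{Y_t\}$ is a point process whose intensity at time $t$ is the input $X_t$. The input is piecewise constant and changes only at output events. At each output event, the input switches to a new value drawn according to $p_X$, independently of all channel inputs and outputs up to that time, and it stays at that value until the next output event. Hence, given that the input was set to $x$ at an event, the time to the next event is exponential with rate $x$. The pair of processes is taken to be jointly stationary on the whole real line. Logarithms are natural, and $h(Y)=-\int f_Y\log f_Y$. *)

theory Defs
  imports "HOL-Probability.Probability"
begin

definition cnt :: "('w \<Rightarrow> real set) \<Rightarrow> real \<Rightarrow> real \<Rightarrow> 'w \<Rightarrow> nat" where
  "cnt Ev a b \<omega> = card (Ev \<omega> \<inter> {a<..b})"

definition next_event :: "('w \<Rightarrow> real set) \<Rightarrow> real \<Rightarrow> 'w \<Rightarrow> real" where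
  "next_event Ev s \<omega> = Inf (Ev \<omega> \<inter> {s<..})"

definition history :: "'w measure \<Rightarrow> (real \<Rightarrow> 'w \<Rightarrow> real) \<Rightarrow> ('w \<Rightarrow> real set) \<Rightarrow> real \<Rightarrow> 'w set set" where
  "history M Xp Ev s = sigma_sets (space M)
     ({{\<omega> \<in> space M. Xp u \<omega> \<in> B} | u B. u \<le> s \<and> B \<in> sets borel} \<union>
      {{\<omega> \<in> space M. cnt Ev a b \<omega> = k} | a b k. a \<le> b \<and> b \<le> s})"

text \<open>Path space: input path and counting function of the output.\<close>
definition path_space :: "((real \<Rightarrow> real) \<times> (real \<times> real \<Rightarrow> nat)) measure" where
  "path_space = (Pi\<^sub>M UNIV (\<lambda>_. borel)) \<Otimes>\<^sub>M (Pi\<^sub>M UNIV (\<lambda>_. count_space UNIV))"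

definition jointly_stationary :: "'w measure \<Rightarrow> (real \<Rightarrow> 'w \<Rightarrow> real) \<Rightarrow> ('w \<Rightarrow> real set) \<Rightarrow> bool" where
  "jointly_stationary M Xp Ev \<longleftrightarrow> (\<forall>c::real.
     distr M path_space (\<lambda>\<omega>. (\<lambda>t. Xp t \<omega>, \<lambda>(a,b). cnt Ev a b \<omega>)) =
     distr M path_space (\<lambda>\<omega>. (\<lambda>t. Xp (t + c) \<omega>, \<lambda>(a,b). cnt Ev (a + c) (b + c) \<omega>)))"

text \<open>Stationary continuous-time Poisson channel with feedback (input switches at output events).\<close>
definition poisson_feedback_channel ::
  "real pmf \<Rightarrow> 'w measure \<Rightarrow> (real \<Rightarrow> 'w \<Rightarrow> real) \<Rightarrow> ('w \<Rightarrow> real set) \<Rightarrow> bool" where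
  "poisson_feedback_channel pX M Xp Ev \<longleftrightarrow>
     prob_space M \<and>
     (\<forall>t. Xp t \<in> borel_measurable M) \<and>
     (\<forall>a b. cnt Ev a b \<in> measurable M (count_space UNIV)) \<and>
     (\<forall>\<omega>\<in>space M. \<forall>a b. finite (Ev \<omega> \<inter> {a..b})) \<and>
     (\<forall>\<omega>\<in>space M. \<forall>t. Xp t \<omega> \<in> set_pmf pX) \<and>
     (\<forall>\<omega>\<in>space M. \<forall>u v. u \<le> v \<longrightarrow> Ev \<omega> \<inter> {u<..v} = {} \<longrightarrow> Xp u \<omega> = Xp v \<omega>) \<and>
     (\<forall>s A x w y. A \<in> history M Xp Ev s \<longrightarrow> 0 \<le> w \<longrightarrow>
        measure M {\<omega> \<in> space M. \<omega> \<in> A \<and> Xp s \<omega> = x \<and> Ev \<omega> \<inter> {s<..} \<noteq> {} \<and>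
                     next_event Ev s \<omega> - s > w \<and> Xp (next_event Ev s \<omega>) \<omega> = y}
        = measure M {\<omega> \<in> space M. \<omega> \<in> A \<and> Xp s \<omega> = x} * exp (- x * w) * pmf pX y) \<and>
     jointly_stationary M Xp Ev"

definition fY :: "real pmf \<Rightarrow> real \<Rightarrow> real" where
  "fY pX y = (\<Sum>x\<in>set_pmf pX. pmf pX x * x * exp (- x * y))"

definition gfun :: "real pmf \<Rightarrow> real \<Rightarrow> real" where
  "gfun pX t = (\<Sum>x\<in>set_pmf pX. x * exp (- t * x) * pmf pX x) / (\<Sum>x\<in>set_pmf pX. exp (- t * x) * pmf pX x)"

definition hY :: "real pmf \<Rightarrow> real" where
  "hY pX = - (LBINT y:{0..}. fY pX y * ln (fY pX y))"

end

theory Submission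
  imports Defs "HOL-Real_Asymp.Real_Asymp"
begin

text \<open>By stationarity the input marginal \<open>q(x) = P{X\<^sub>t = x}\<close> does not depend on \<open>t\<close>.
  Over a short window \<open>(0,d]\<close> the input ends in state \<open>x\<close> either because it started there and
  no event occurred (probability \<open>q(x) e\<^sup>-\<^sup>x\<^sup>d\<close>), or because exactly one event occurred and
  drew \<open>x\<close> (probability at most \<open>p\<^sub>X(x) \<lambda> d\<close>, where \<open>\<lambda> = \<Sum> q(x') x'\<close> is the event rate),
  or because at least two events occurred (probability \<open>O(d\<^sup>2)\<close>, by cutting the window into
  ever finer cells). Letting \<open>d \<rightarrow> 0\<close> gives \<open>q(x) x \<le> p\<^sub>X(x) \<lambda>\<close>, and summing over \<open>x\<close> forces
  equality, i.e. \<open>q(x) \<propto> p\<^sub>X(x)/x\<close>.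

  Again by stationarity, \<open>P{\<tau> > t}\<close> is the probability of no event in \<open>(-t,0]\<close>, which is
  \<open>\<Sum> q(x) e\<^sup>-\<^sup>x\<^sup>t\<close>; differentiating gives the density \<open>S(t)/E[1/X]\<close> with \<open>S(t) = P{Y \<ge> t}\<close>.
  Finally \<open>f\<^sub>Y = -S'\<close> and \<open>g = f\<^sub>Y/S\<close>, so \<open>f\<^sub>Y log f\<^sub>Y = f\<^sub>Y log g + f\<^sub>Y log S\<close> with
  \<open>\<integral> -f\<^sub>Y log S = \<integral> (S log S - S)' = 1\<close>; hence \<open>E[g(\<tau>) log g(\<tau>)] = \<integral> f\<^sub>Y log g / E[1/X]
  = (1 - h(Y))/E[1/X]\<close>.\<close>

lemma tendsto_x_ln_x_at_right_0: "((\<lambda>x::real. x * ln x) \<longlongrightarrow> 0) (at_right 0)"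
  by real_asymp

lemma set_integral_Ioi_FTC_nonneg:
  fixes F f :: "real \<Rightarrow> real"
  assumes F: "\<And>x. 0 < x \<Longrightarrow> DERIV F x :> f x"
    and f: "\<And>x. 0 < x \<Longrightarrow> isCont f x"
    and f_nonneg: "\<And>x. 0 < x \<Longrightarrow> 0 \<le> f x"
    and A: "(F \<longlongrightarrow> A) (at_right 0)"
    and B: "(F \<longlongrightarrow> B) at_top"
  shows "set_integrable lborel {0<..} f" "(LBINT x:{0<..}. f x) = B - A"
proof -
  have F': "\<And>x. 0 < ereal x \<Longrightarrow> ereal x < \<infinity> \<Longrightarrow> DERIV F x :> f x"
    and f': "\<And>x. 0 < ereal x \<Longrightarrow> ereal x < \<infinity> \<Longrightarrow> isCont f x"
    and f_nonneg': "AE x in lborel. 0 < ereal x \<longrightarrow> ereal x < \<infinity> \<longrightarrow> 0 \<le> f x"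
    using F f f_nonneg by (simp_all add: zero_ereal_def)
  have A': "((F \<circ> real_of_ereal) \<longlongrightarrow> A) (at_right 0)"
    using A unfolding zero_ereal_def ereal_tendsto_simps1 .
  have B': "((F \<circ> real_of_ereal) \<longlongrightarrow> B) (at_left \<infinity>)"
    using B unfolding ereal_tendsto_simps1 .
  note FTC = interval_integral_FTC_nonneg[OF _ F' f' f_nonneg' A' B', simplified]
  show "set_integrable lborel {0<..} f" using FTC(1) by (simp add: zero_ereal_def)
  show "(LBINT x:{0<..}. f x) = B - A" using FTC(2) by (metis interval_lebesgue_integral_0_infty(2))
qed

lemma tendsto_one_minus_exp_div: "((\<lambda>d. (1 - exp (- x * d)) / d) \<longlongrightarrow> (x::real)) (at_right 0)"
proof -
  have "((\<lambda>d. 1 - exp (- x * d)) has_real_derivative x) (at 0)"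
    by (auto intro!: derivative_eq_intros)
  then have "((\<lambda>d. (1 - exp (- x * (0 + d)) - (1 - exp (- x * 0))) / d) \<longlongrightarrow> x) (at 0)"
    unfolding DERIV_def .
  then show ?thesis by (simp add: filterlim_at_split)
qed

locale finite_positive_pmf =
  fixes pX :: "real pmf"
  assumes finite_support: "finite (set_pmf pX)"
    and support_positive: "set_pmf pX \<subseteq> {0<..}"
begin

lemma pos_of_support: "x \<in> set_pmf pX \<Longrightarrow> 0 < x"
  using support_positive by auto

lemma sum_pmf: "(\<Sum>x\<in>set_pmf pX. pmf pX x) = 1"
  using finite_support by (simp add: sum_pmf_eq_1)

lemma expectation_eq_sum: "measure_pmf.expectation pX f = (\<Sum>x\<in>set_pmf pX. f x * pmf pX x)"
  by (rule integral_measure_pmf_real[OF finite_support]) auto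

definition xmin :: real where "xmin = Min (set_pmf pX)"
definition xmax :: real where "xmax = Max (set_pmf pX)"

lemma xmin_le: "x \<in> set_pmf pX \<Longrightarrow> xmin \<le> x"
  unfolding xmin_def using finite_support by simp

lemma le_xmax: "x \<in> set_pmf pX \<Longrightarrow> x \<le> xmax"
  unfolding xmax_def using finite_support by simp

lemma xmin_pos: "0 < xmin"
  unfolding xmin_def Min_gr_iff[OF finite_support set_pmf_not_empty] using pos_of_support by blast

lemma xmax_pos: "0 < xmax"
  using xmin_pos xmin_le le_xmax set_pmf_not_empty by fastforce

abbreviation mean_inv :: real where
  "mean_inv \<equiv> measure_pmf.expectation pX (\<lambda>x. 1 / x)"

lemma mean_inv_eq_sum: "mean_inv = (\<Sum>x\<in>set_pmf pX. (1 / x) * pmf pX x)"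
  by (rule expectation_eq_sum)

lemma mean_inv_pos: "0 < mean_inv"
  unfolding mean_inv_eq_sum
  by (rule sum_pos[OF finite_support set_pmf_not_empty]) (auto simp: pos_of_support pmf_positive)

definition survY :: "real \<Rightarrow> real" where
  "survY t = (\<Sum>x\<in>set_pmf pX. exp (- t * x) * pmf pX x)"

lemma survY_pos: "0 < survY t"
  unfolding survY_def by (rule sum_pos[OF finite_support set_pmf_not_empty]) (auto simp: pmf_positive)

lemma fY_pos: "0 < fY pX t"
  unfolding fY_def
  by (rule sum_pos[OF finite_support set_pmf_not_empty]) (auto simp: pmf_positive pos_of_support)

lemma survY_le_1: "0 \<le> t \<Longrightarrow> survY t \<le> 1"
  unfolding survY_def sum_pmf[symmetric]
  by (intro sum_mono mult_left_le_one_le) (auto dest: pos_of_support)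

lemma has_real_derivative_survY: "(survY has_real_derivative - fY pX t) (at t)"
proof -
  have "((\<lambda>t. \<Sum>x\<in>set_pmf pX. exp (- t * x) * pmf pX x) has_real_derivative
        (\<Sum>x\<in>set_pmf pX. exp (- t * x) * (- x) * pmf pX x)) (at t)"
    by (rule DERIV_sum) (auto intro!: derivative_eq_intros)
  moreover have "(\<Sum>x\<in>set_pmf pX. exp (- t * x) * (- x) * pmf pX x) = - fY pX t"
    unfolding fY_def by (simp add: sum_negf[symmetric] mult_ac)
  ultimately show ?thesis unfolding survY_def[abs_def] by simp
qed

lemma isCont_survY: "isCont survY t"
  using DERIV_isCont[OF has_real_derivative_survY] .

lemma isCont_fY: "isCont (fY pX) t"
  unfolding fY_def[abs_def] by (intro continuous_intros)

lemma survY_tendsto_1: "(survY \<longlongrightarrow> 1) (at_right 0)"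
proof -
  have "survY 0 = 1" unfolding survY_def using sum_pmf by simp
  then show ?thesis
    using isCont_survY[of 0] by (simp add: isCont_def filterlim_at_split)
qed

lemma survY_tendsto_0: "(survY \<longlongrightarrow> 0) at_top"
proof -
  have "((\<lambda>t. exp (- t * x)) \<longlongrightarrow> 0) at_top" if "x \<in> set_pmf pX" for x
    using pos_of_support[OF that]
    by (auto intro!: exp_at_bot[THEN filterlim_compose] filterlim_tendsto_pos_mult_at_top filterlim_ident
             simp: filterlim_uminus_at_bot mult.commute[of _ x])
  then have "(survY \<longlongrightarrow> (\<Sum>x\<in>set_pmf pX. 0 * pmf pX x)) at_top"
    unfolding survY_def[abs_def] by (intro tendsto_sum tendsto_mult tendsto_const) auto
  then show ?thesis by simp
qed

lemma gfun_eq: "gfun pX t = fY pX t / survY t"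
  unfolding gfun_def fY_def survY_def by (simp add: mult_ac)

lemma gfun_bounds: "xmin \<le> gfun pX t" "gfun pX t \<le> xmax"
proof -
  have "xmin * survY t \<le> fY pX t" unfolding survY_def fY_def sum_distrib_left
    by (rule sum_mono) (auto simp: mult_ac intro!: mult_right_mono[OF xmin_le])
  then show "xmin \<le> gfun pX t" unfolding gfun_eq using survY_pos[of t] by (simp add: field_simps)
  have "fY pX t \<le> xmax * survY t" unfolding survY_def fY_def sum_distrib_left
    by (rule sum_mono) (auto simp: mult_ac intro!: mult_right_mono[OF le_xmax])
  then show "gfun pX t \<le> xmax" unfolding gfun_eq using survY_pos[of t] by (simp add: field_simps)
qed

lemma abs_ln_gfun_le: "\<bar>ln (gfun pX t)\<bar> \<le> \<bar>ln xmin\<bar> + \<bar>ln xmax\<bar>"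
proof -
  have "ln xmin \<le> ln (gfun pX t)" "ln (gfun pX t) \<le> ln xmax"
    using gfun_bounds[of t] xmin_pos by simp_all
  then show ?thesis by linarith
qed

lemma fY_integral:
  "set_integrable lborel {0<..} (fY pX)" "(LBINT y:{0<..}. fY pX y) = 1"
proof -
  have "DERIV (\<lambda>t. - survY t) y :> fY pX y" for y
    using DERIV_minus[OF has_real_derivative_survY] by simp
  moreover have "((\<lambda>t. - survY t) \<longlongrightarrow> -1) (at_right 0)"
    by (intro tendsto_minus survY_tendsto_1)
  moreover have "((\<lambda>t. - survY t) \<longlongrightarrow> - 0) at_top"
    by (intro tendsto_minus survY_tendsto_0)
  ultimately have FTC: "set_integrable lborel {0<..} (fY pX)" "(LBINT y:{0<..}. fY pX y) = - 0 - - 1"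
    using set_integral_Ioi_FTC_nonneg[of "\<lambda>t. - survY t" "fY pX"] isCont_fY fY_pos less_imp_le
    by blast+
  show "set_integrable lborel {0<..} (fY pX)" "(LBINT y:{0<..}. fY pX y) = 1"
    using FTC by simp_all
qed

lemma fY_ln_survY_integral:
  "set_integrable lborel {0<..} (\<lambda>y. - (fY pX y * ln (survY y)))"
  "(LBINT y:{0<..}. - (fY pX y * ln (survY y))) = 1"
proof -
  define F where "F t = survY t * ln (survY t) - survY t" for t
  have "DERIV F y :> - (fY pX y * ln (survY y))" for y
    unfolding F_def[abs_def] using survY_pos[of y]
    by (auto intro!: derivative_eq_intros has_real_derivative_survY simp: field_simps)
  moreover have "isCont (\<lambda>y. - (fY pX y * ln (survY y))) y" for y
    by (intro continuous_intros isCont_fY continuous_at_compose[OF isCont_survY, unfolded o_def])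
      (use survY_pos[of y] in auto)
  moreover have "0 \<le> - (fY pX y * ln (survY y))" if "0 < y" for y
    using survY_le_1[of y] survY_pos[of y] fY_pos[of y] that by (simp add: mult_nonneg_nonpos)
  moreover have "(F \<longlongrightarrow> 1 * ln 1 - 1) (at_right 0)"
    unfolding F_def by (intro tendsto_intros survY_tendsto_1) simp
  moreover have "(F \<longlongrightarrow> 0 - 0) at_top"
  proof -
    have "filterlim survY (at_right 0) at_top"
      using survY_tendsto_0 survY_pos unfolding filterlim_at
      by (auto intro!: always_eventually simp: less_imp_neq[symmetric])
    then have "((\<lambda>t. survY t * ln (survY t)) \<longlongrightarrow> 0) at_top"
      by (rule filterlim_compose[OF tendsto_x_ln_x_at_right_0])
    then show ?thesis unfolding F_def by (intro tendsto_diff survY_tendsto_0)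
  qed
  ultimately show "set_integrable lborel {0<..} (\<lambda>y. - (fY pX y * ln (survY y)))"
    "(LBINT y:{0<..}. - (fY pX y * ln (survY y))) = 1"
    using set_integral_Ioi_FTC_nonneg[of F] by simp_all
qed

lemma fY_ln_gfun_integrable: "set_integrable lborel {0<..} (\<lambda>y. fY pX y * ln (gfun pX y))"
proof (rule set_integrable_bound)
  show "set_integrable lborel {0<..} (\<lambda>y. (\<bar>ln xmin\<bar> + \<bar>ln xmax\<bar>) * fY pX y)"
    using fY_integral(1) by (rule set_integrable_mult_right)
  show "set_borel_measurable lborel {0<..} (\<lambda>y. fY pX y * ln (gfun pX y))"
    unfolding set_borel_measurable_def gfun_def fY_def by measurable
  show "AE y in lborel. y \<in> {0<..} \<longrightarrow>
      norm (fY pX y * ln (gfun pX y)) \<le> norm ((\<bar>ln xmin\<bar> + \<bar>ln xmax\<bar>) * fY pX y)"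
    using abs_ln_gfun_le by (intro always_eventually) (auto simp: abs_mult mult.commute intro!: mult_left_mono)
qed

lemma hY_eq: "hY pX = 1 - (LBINT y:{0<..}. fY pX y * ln (gfun pX y))"
proof -
  have split: "fY pX y * ln (fY pX y) = fY pX y * ln (gfun pX y) - - (fY pX y * ln (survY y))" for y
    using fY_pos[of y] survY_pos[of y] unfolding gfun_eq by (simp add: ln_div algebra_simps)
  have "(LBINT y:{0..}. fY pX y * ln (fY pX y)) = (LBINT y:{0<..}. fY pX y * ln (fY pX y))"
  proof (rule set_integral_cong_set)
    show "AE y in lborel. ((y::real) \<in> {0<..}) = (y \<in> {0..})"
      using AE_lborel_singleton[of 0] by eventually_elim (auto simp: le_less)
  qed (auto simp: set_borel_measurable_def fY_def)
  also have "\<dots> = (LBINT y:{0<..}. fY pX y * ln (gfun pX y)) - 1"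
    unfolding split using set_integral_diff(2)[OF fY_ln_gfun_integrable fY_ln_survY_integral(1)]
      fY_ln_survY_integral(2) by simp
  finally show ?thesis unfolding hY_def by simp
qed

definition tau_density :: "real \<Rightarrow> real" where
  "tau_density t = (if 0 \<le> t then survY t / mean_inv else 0)"

definition tau_cdf :: "real \<Rightarrow> real" where
  "tau_cdf a = (if 0 \<le> a then 1 - (\<Sum>x\<in>set_pmf pX. (1 / x) * pmf pX x * exp (- x * a)) / mean_inv else 0)"

lemma tau_density_nonneg: "0 \<le> tau_density t"
  unfolding tau_density_def using survY_pos mean_inv_pos by (simp add: less_imp_le)

lemma nn_integral_tau_density_atMost:
  "(\<integral>\<^sup>+t. ennreal (tau_density t * indicator {..a} t) \<partial>lborel) = ennreal (tau_cdf a)"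
proof (cases "0 \<le> a")
  case False
  then have "(\<lambda>t. ennreal (tau_density t * indicator {..a} t)) = (\<lambda>t. 0)"
    by (auto simp: fun_eq_iff tau_density_def indicator_def)
  then show ?thesis using False unfolding tau_cdf_def by simp
next
  case True
  define F where "F t = - (\<Sum>x\<in>set_pmf pX. (1 / x) * pmf pX x * exp (- x * t)) / mean_inv" for t
  have "(F has_real_derivative survY t / mean_inv) (at t)" for t
  proof -
    have "((\<lambda>t. \<Sum>x\<in>set_pmf pX. (1 / x) * pmf pX x * exp (- x * t)) has_real_derivative
        (\<Sum>x\<in>set_pmf pX. (1 / x) * pmf pX x * (exp (- x * t) * - x))) (at t)"
      by (rule DERIV_sum) (auto intro!: derivative_eq_intros)
    then have "(F has_real_derivative - (\<Sum>x\<in>set_pmf pX. (1 / x) * pmf pX x * (exp (- x * t) * - x)) / mean_inv) (at t)"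
      unfolding F_def[abs_def] by (rule DERIV_cdivide[OF DERIV_minus])
    moreover have "(\<Sum>x\<in>set_pmf pX. (1 / x) * pmf pX x * (exp (- x * t) * - x)) = - survY t"
      unfolding survY_def sum_negf[symmetric]
      by (rule sum.cong) (auto dest!: pos_of_support simp: field_simps)
    ultimately show ?thesis by simp
  qed
  then have "((\<lambda>t. survY t / mean_inv) has_integral F a - F 0) {0..a}"
    by (intro fundamental_theorem_of_calculus True)
      (auto simp: has_real_derivative_iff_has_vector_derivative[symmetric] intro: has_field_derivative_at_within)
  moreover have "(\<lambda>t. ennreal (tau_density t * indicator {..a} t)) = (\<lambda>t. ennreal (survY t / mean_inv) * indicator {0..a} t)"
    by (auto simp: fun_eq_iff tau_density_def indicator_def)
  moreover have "F a - F 0 = tau_cdf a"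
    unfolding F_def tau_cdf_def mean_inv_eq_sum using True mean_inv_pos mean_inv_eq_sum
    by (simp add: field_simps)
  ultimately show ?thesis
    using nn_integral_has_integral_lebesgue'[of "{0..a}" "\<lambda>t. survY t / mean_inv"] survY_pos mean_inv_pos
    by (simp add: less_imp_le)
qed

lemma integral_gfun_ln_gfun:
  assumes "distributed N lborel T (\<lambda>t. ennreal (tau_density t))"
  shows "(\<integral>\<omega>. gfun pX (T \<omega>) * ln (gfun pX (T \<omega>)) \<partial>N) = (1 - hY pX) / mean_inv"
proof -
  have "(\<integral>\<omega>. gfun pX (T \<omega>) * ln (gfun pX (T \<omega>)) \<partial>N)
      = (\<integral>t. tau_density t * (gfun pX t * ln (gfun pX t)) \<partial>lborel)"
    by (rule distributed_integral[OF assms, symmetric]) (auto simp: gfun_def tau_density_nonneg)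
  also have "\<dots> = (LBINT t:{0<..}. fY pX t * ln (gfun pX t) / mean_inv)"
    unfolding set_lebesgue_integral_def
  proof (rule integral_cong_AE)
    show "(\<lambda>t. tau_density t * (gfun pX t * ln (gfun pX t))) \<in> borel_measurable lborel"
      unfolding tau_density_def survY_def gfun_def by measurable
    show "(\<lambda>t. indicator {0<..} t *\<^sub>R (fY pX t * ln (gfun pX t) / mean_inv)) \<in> borel_measurable lborel"
      unfolding fY_def gfun_def by measurable
    show "AE t in lborel. tau_density t * (gfun pX t * ln (gfun pX t))
        = indicator {0<..} t *\<^sub>R (fY pX t * ln (gfun pX t) / mean_inv)"
      using AE_lborel_singleton[of 0]
      by eventually_elim (use survY_pos in \<open>auto simp: tau_density_def gfun_eq indicator_def\<close>)
  qed
  also have "\<dots> = (LBINT t:{0<..}. fY pX t * ln (gfun pX t)) / mean_inv"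
    by (rule set_integral_divide_zero)
  finally show ?thesis unfolding hY_eq by simp
qed

end

definition grid :: "real \<Rightarrow> nat \<Rightarrow> nat \<Rightarrow> real" where
  "grid d n k = real k * d / real n"

lemma grid_0: "grid d n 0 = 0"
  unfolding grid_def by simp

lemma grid_last: "0 < n \<Longrightarrow> grid d n n = d"
  unfolding grid_def by simp

lemma grid_nonneg: "0 \<le> d \<Longrightarrow> 0 \<le> grid d n k"
  unfolding grid_def by simp

lemma grid_mono: "0 \<le> d \<Longrightarrow> k \<le> k' \<Longrightarrow> grid d n k \<le> grid d n k'"
  unfolding grid_def by (intro divide_right_mono mult_right_mono) auto

lemma grid_le: "0 \<le> d \<Longrightarrow> k \<le> n \<Longrightarrow> grid d n k \<le> d"
  using grid_mono[of d k n n] grid_last[of n d] by (cases "n = 0") (auto simp: grid_def)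

lemma grid_Suc_diff: "0 < n \<Longrightarrow> grid d n (Suc k) - grid d n k = d / real n"
  unfolding grid_def by (simp add: field_simps)

locale poisson_feedback = finite_positive_pmf pX for pX :: "real pmf" +
  fixes M :: "'w measure" and Xp :: "real \<Rightarrow> 'w \<Rightarrow> real" and Ev :: "'w \<Rightarrow> real set"
  assumes channel: "poisson_feedback_channel pX M Xp Ev"
begin

sublocale prob_space M
  using channel unfolding poisson_feedback_channel_def by blast

lemma Xp_measurable [measurable]: "Xp t \<in> borel_measurable M"
  using channel unfolding poisson_feedback_channel_def by blast

lemma cnt_measurable [measurable]: "cnt Ev a b \<in> measurable M (count_space UNIV)"
  using channel unfolding poisson_feedback_channel_def by blast

lemma finite_events_Icc: "\<omega> \<in> space M \<Longrightarrow> finite (Ev \<omega> \<inter> {a..b})"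
  using channel unfolding poisson_feedback_channel_def by blast

lemma Xp_in_support: "\<omega> \<in> space M \<Longrightarrow> Xp t \<omega> \<in> set_pmf pX"
  using channel unfolding poisson_feedback_channel_def by blast

lemma Xp_eq_if_no_events:
  "\<omega> \<in> space M \<Longrightarrow> u \<le> v \<Longrightarrow> Ev \<omega> \<inter> {u<..v} = {} \<Longrightarrow> Xp u \<omega> = Xp v \<omega>"
  using channel unfolding poisson_feedback_channel_def by blast

lemma next_event_law:
  "A \<in> history M Xp Ev s \<Longrightarrow> 0 \<le> w \<Longrightarrow>
   measure M {\<omega> \<in> space M. \<omega> \<in> A \<and> Xp s \<omega> = x \<and> Ev \<omega> \<inter> {s<..} \<noteq> {} \<and>
                next_event Ev s \<omega> - s > w \<and> Xp (next_event Ev s \<omega>) \<omega> = y}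
   = measure M {\<omega> \<in> space M. \<omega> \<in> A \<and> Xp s \<omega> = x} * exp (- x * w) * pmf pX y"
  using channel unfolding poisson_feedback_channel_def by blast

lemma stationary: "jointly_stationary M Xp Ev"
  using channel unfolding poisson_feedback_channel_def by blast

lemma finite_events_Ioc: "\<omega> \<in> space M \<Longrightarrow> finite (Ev \<omega> \<inter> {a<..b})"
  by (rule finite_subset[OF _ finite_events_Icc[of \<omega> a b]]) auto

lemma cnt_eq_0_iff: "\<omega> \<in> space M \<Longrightarrow> cnt Ev a b \<omega> = 0 \<longleftrightarrow> Ev \<omega> \<inter> {a<..b} = {}"
  using finite_events_Ioc unfolding cnt_def by auto

lemma cnt_add:
  assumes "\<omega> \<in> space M" "a \<le> b" "b \<le> c"
  shows "cnt Ev a c \<omega> = cnt Ev a b \<omega> + cnt Ev b c \<omega>"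
proof -
  have "Ev \<omega> \<inter> {a<..c} = (Ev \<omega> \<inter> {a<..b}) \<union> (Ev \<omega> \<inter> {b<..c})" using assms by auto
  then show ?thesis
    unfolding cnt_def using finite_events_Ioc[OF assms(1)] by (simp add: card_Un_disjoint disjoint_iff)
qed

lemma cnt_mono: "\<omega> \<in> space M \<Longrightarrow> a \<le> a' \<Longrightarrow> b' \<le> b \<Longrightarrow> cnt Ev a' b' \<omega> \<le> cnt Ev a b \<omega>"
  unfolding cnt_def by (rule card_mono[OF finite_events_Ioc]) auto

lemma sets_cnt: "{\<omega>\<in>space M. P (cnt Ev a b \<omega>)} \<in> sets M"
  using measurable_sets[OF cnt_measurable, of "{k. P k}" a b] by (simp add: vimage_def Int_def conj_commute)

lemma sets_Xp_eq: "{\<omega>\<in>space M. Xp t \<omega> = x} \<in> sets M"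
  using measurable_sets[OF Xp_measurable, of "{x}" t] by (simp add: vimage_def Int_def conj_commute)

lemma sigma_algebra_history: "sigma_algebra (space M) (history M Xp Ev s)"
  unfolding history_def by (rule sigma_algebra_sigma_sets) blast

lemma history_subset_sets: "history M Xp Ev s \<subseteq> sets M"
  unfolding history_def
proof (rule sets.sigma_sets_subset)
  have "{\<omega> \<in> space M. Xp u \<omega> \<in> B} \<in> sets M" if "B \<in> sets borel" for u B
    using measurable_sets[OF Xp_measurable that, of u] by (simp add: vimage_def Int_def conj_commute)
  moreover have "{\<omega> \<in> space M. cnt Ev a b \<omega> = k} \<in> sets M" for a b k
    by (rule sets_cnt)
  ultimately show "{{\<omega> \<in> space M. Xp u \<omega> \<in> B} |u B. u \<le> s \<and> B \<in> sets borel} \<union>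
      {{\<omega> \<in> space M. cnt Ev a b \<omega> = k} |a b k. a \<le> b \<and> b \<le> s} \<subseteq> sets M"
    by blast
qed

lemma history_space: "space M \<in> history M Xp Ev s"
  unfolding history_def by (rule sigma_sets_top)

lemma history_cnt:
  assumes "a \<le> b" "b \<le> s"
  shows "{\<omega>\<in>space M. P (cnt Ev a b \<omega>)} \<in> history M Xp Ev s"
proof -
  have "{\<omega>\<in>space M. cnt Ev a b \<omega> = k} \<in> history M Xp Ev s" for k
    unfolding history_def
    by (rule sigma_sets.Basic, rule UnI2, simp only: mem_Collect_eq) (use assms in blast)
  then have "(\<Union>k\<in>{k. P k}. {\<omega>\<in>space M. cnt Ev a b \<omega> = k}) \<in> history M Xp Ev s"
    by (intro sigma_algebra.countable_UN[OF sigma_algebra_history]) blast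
  moreover have "(\<Union>k\<in>{k. P k}. {\<omega>\<in>space M. cnt Ev a b \<omega> = k}) = {\<omega>\<in>space M. P (cnt Ev a b \<omega>)}"
    by auto
  ultimately show ?thesis by simp
qed

lemma next_event_least:
  assumes \<omega>: "\<omega> \<in> space M" and ne: "Ev \<omega> \<inter> {s<..} \<noteq> {}"
  shows "next_event Ev s \<omega> \<in> Ev \<omega>" "s < next_event Ev s \<omega>"
    and "\<And>e. e \<in> Ev \<omega> \<Longrightarrow> s < e \<Longrightarrow> next_event Ev s \<omega> \<le> e"
proof -
  obtain e0 where e0: "e0 \<in> Ev \<omega>" "s < e0" using ne by auto
  define F where "F = Ev \<omega> \<inter> {s<..e0}"
  have "finite F" "F \<noteq> {}"
    unfolding F_def using finite_events_Ioc[OF \<omega>] e0 by auto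
  then have min: "Min F \<in> F" "\<And>e. e \<in> F \<Longrightarrow> Min F \<le> e" by simp_all
  have "Inf (Ev \<omega> \<inter> {s<..}) = Min F"
  proof (rule cInf_eq_minimum)
    show "Min F \<in> Ev \<omega> \<inter> {s<..}" using min(1) unfolding F_def by auto
    show "Min F \<le> e" if "e \<in> Ev \<omega> \<inter> {s<..}" for e
      using that min unfolding F_def by (cases "e \<le> e0") fastforce+
  qed
  then have next_eq: "next_event Ev s \<omega> = Min F" unfolding next_event_def .
  then show "next_event Ev s \<omega> \<in> Ev \<omega>" "s < next_event Ev s \<omega>"
    using min(1) unfolding F_def by auto
  show "next_event Ev s \<omega> \<le> e" if "e \<in> Ev \<omega>" "s < e" for e
  proof (cases "e \<le> e0")
    case True then show ?thesis using that min(2) unfolding next_eq F_def by simp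
  next
    case False then show ?thesis using min(1) unfolding next_eq F_def by auto
  qed
qed

lemma next_event_gt_iff:
  assumes \<omega>: "\<omega> \<in> space M" and ne: "Ev \<omega> \<inter> {s<..} \<noteq> {}" and "0 \<le> w"
  shows "next_event Ev s \<omega> - s > w \<longleftrightarrow> cnt Ev s (s + w) \<omega> = 0"
proof -
  have "Ev \<omega> \<inter> {s<..s + w} = {} \<longleftrightarrow> \<not> (\<exists>e\<in>Ev \<omega>. s < e \<and> e \<le> s + w)"
    by auto
  also have "\<dots> \<longleftrightarrow> \<not> next_event Ev s \<omega> \<le> s + w"
    using next_event_least[OF \<omega> ne] by (meson order_trans)
  finally show ?thesis unfolding cnt_eq_0_iff[OF \<omega>] by linarith
qed

definition cond_set :: "'w set \<Rightarrow> real \<Rightarrow> real \<Rightarrow> 'w set" where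
  "cond_set A s x = {\<omega> \<in> space M. \<omega> \<in> A \<and> Xp s \<omega> = x}"

definition wait_set :: "'w set \<Rightarrow> real \<Rightarrow> real \<Rightarrow> real \<Rightarrow> 'w set" where
  "wait_set A s x w = {\<omega> \<in> cond_set A s x. Ev \<omega> \<inter> {s<..} \<noteq> {} \<and> next_event Ev s \<omega> - s > w}"

definition wait_switch_set :: "'w set \<Rightarrow> real \<Rightarrow> real \<Rightarrow> real \<Rightarrow> real \<Rightarrow> 'w set" where
  "wait_switch_set A s x w y = {\<omega> \<in> wait_set A s x w. Xp (next_event Ev s \<omega>) \<omega> = y}"

lemma measure_wait_switch_set:
  "A \<in> history M Xp Ev s \<Longrightarrow> 0 \<le> w \<Longrightarrow>
   measure M (wait_switch_set A s x w y) = measure M (cond_set A s x) * exp (- x * w) * pmf pX y"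
  unfolding wait_switch_set_def wait_set_def cond_set_def
  using next_event_law by (simp add: conj_assoc)

lemma sets_cond_set: "A \<in> history M Xp Ev s \<Longrightarrow> cond_set A s x \<in> sets M"
proof -
  assume "A \<in> history M Xp Ev s"
  then have "A \<in> sets M" using history_subset_sets by blast
  moreover have "cond_set A s x = A \<inter> {\<omega>\<in>space M. Xp s \<omega> = x}" unfolding cond_set_def by auto
  ultimately show ?thesis using sets_Xp_eq by auto
qed

text \<open>The channel law only fixes the \<^emph>\<open>measure\<close> of these sets, which is \<open>0\<close> for
  non-measurable sets; a positive value therefore certifies measurability.\<close>
lemma sets_wait_switch_set:
  assumes "A \<in> history M Xp Ev s" "0 \<le> w" "y \<in> set_pmf pX" "0 < measure M (cond_set A s x)"
  shows "wait_switch_set A s x w y \<in> sets M"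
  using measure_wait_switch_set[OF assms(1,2), of x y] measure_notin_sets[of "wait_switch_set A s x w y" M]
    assms(4) pmf_positive[OF assms(3)] by fastforce

lemma wait_set_law:
  assumes A: "A \<in> history M Xp Ev s" and w: "0 \<le> w" and pos: "0 < measure M (cond_set A s x)"
  shows "wait_set A s x w \<in> sets M" "measure M (wait_set A s x w) = measure M (cond_set A s x) * exp (- x * w)"
proof -
  have eq: "wait_set A s x w = (\<Union>y\<in>set_pmf pX. wait_switch_set A s x w y)"
    unfolding wait_switch_set_def wait_set_def cond_set_def using Xp_in_support by auto
  have sets: "wait_switch_set A s x w ` set_pmf pX \<subseteq> sets M"
    using sets_wait_switch_set[OF A w _ pos] by auto
  show "wait_set A s x w \<in> sets M" unfolding eq using sets finite_support by auto
  have "measure M (wait_set A s x w) = (\<Sum>y\<in>set_pmf pX. measure M (wait_switch_set A s x w y))"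
    unfolding eq
    by (rule finite_measure_finite_Union[OF finite_support sets])
      (auto simp: disjoint_family_on_def wait_switch_set_def)
  also have "\<dots> = measure M (cond_set A s x) * exp (- x * w)"
    using measure_wait_switch_set[OF A w] by (simp add: sum_distrib_left[symmetric] sum_pmf)
  finally show "measure M (wait_set A s x w) = measure M (cond_set A s x) * exp (- x * w)" .
qed

text \<open>Paths in \<open>cond_set A s x\<close> without any event after \<open>s\<close> form a null set, namely the
  complement of \<open>wait_set A s x 0\<close>.\<close>
lemma measure_no_event:
  assumes A: "A \<in> history M Xp Ev s" and w: "0 \<le> w"
  shows "measure M {\<omega>\<in>cond_set A s x. cnt Ev s (s + w) \<omega> = 0} = measure M (cond_set A s x) * exp (- x * w)"
proof (cases "0 < measure M (cond_set A s x)")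
  case False
  then have "measure M (cond_set A s x) = 0" using measure_nonneg[of M "cond_set A s x"] by linarith
  moreover have "measure M {\<omega>\<in>cond_set A s x. cnt Ev s (s + w) \<omega> = 0} \<le> measure M (cond_set A s x)"
    by (rule finite_measure_mono[OF _ sets_cond_set[OF A]]) auto
  ultimately show ?thesis using measure_nonneg by (metis antisym mult_zero_left)
next
  case True
  note W = wait_set_law[OF A w True] wait_set_law[OF A order_refl True]
  define Z where "Z = cond_set A s x - wait_set A s x 0"
  have Z: "Z \<in> sets M" "measure M Z = 0"
    unfolding Z_def using W sets_cond_set[OF A]
    by (auto simp: finite_measure_Diff wait_set_def)
  have "\<omega> \<in> wait_set A s x w \<union> Z \<longleftrightarrow> cnt Ev s (s + w) \<omega> = 0" if "\<omega> \<in> cond_set A s x" for \<omega>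
  proof -
    have \<omega>: "\<omega> \<in> space M" using that unfolding cond_set_def by simp
    show ?thesis
    proof (cases "Ev \<omega> \<inter> {s<..} = {}")
      case True
      then have "cnt Ev s (s + w) \<omega> = 0" using cnt_eq_0_iff[OF \<omega>] by auto
      then show ?thesis using True that unfolding Z_def wait_set_def by auto
    next
      case False
      then show ?thesis
        using that next_event_gt_iff[OF \<omega> False w] next_event_least(2)[OF \<omega> False]
        unfolding Z_def wait_set_def by auto
    qed
  qed
  moreover have "wait_set A s x w \<union> Z \<subseteq> cond_set A s x"
    unfolding Z_def wait_set_def by auto
  ultimately have "{\<omega>\<in>cond_set A s x. cnt Ev s (s + w) \<omega> = 0} = wait_set A s x w \<union> Z"
    by blast
  moreover have "wait_set A s x w \<inter> Z = {}"
    unfolding Z_def wait_set_def cond_set_def using next_event_least(2) by auto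
  ultimately show ?thesis using finite_measure_Union[OF W(1) Z(1)] W(2) Z(2) by simp
qed

definition shifted_path :: "real \<Rightarrow> 'w \<Rightarrow> (real \<Rightarrow> real) \<times> (real \<times> real \<Rightarrow> nat)" where
  "shifted_path c \<omega> = (\<lambda>t. Xp (t + c) \<omega>, \<lambda>(a, b). cnt Ev (a + c) (b + c) \<omega>)"

lemma shifted_path_measurable: "shifted_path c \<in> measurable M path_space"
  unfolding path_space_def shifted_path_def
proof (rule measurable_Pair)
  show "(\<lambda>\<omega> t. Xp (t + c) \<omega>) \<in> measurable M (Pi\<^sub>M UNIV (\<lambda>_. borel))"
    by (rule measurable_PiM_single') auto
  have "(\<lambda>\<omega> i. (case i of (a, b) \<Rightarrow> cnt Ev (a + c) (b + c)) \<omega>) \<in> measurable M (Pi\<^sub>M UNIV (\<lambda>_. count_space UNIV))"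
    by (rule measurable_PiM_single') (auto split: prod.splits)
  then show "(\<lambda>\<omega>. \<lambda>(a, b). cnt Ev (a + c) (b + c) \<omega>) \<in> measurable M (Pi\<^sub>M UNIV (\<lambda>_. count_space UNIV))"
    by (simp add: case_prod_beta')
qed

lemma measure_shifted_path:
  assumes "S \<in> sets path_space"
  shows "measure M {\<omega>\<in>space M. shifted_path c \<omega> \<in> S} = measure M {\<omega>\<in>space M. shifted_path 0 \<omega> \<in> S}"
proof -
  have "distr M path_space (shifted_path 0) = distr M path_space (shifted_path c)"
    using stationary unfolding jointly_stationary_def shifted_path_def by simp
  then show ?thesis
    using measure_distr[OF shifted_path_measurable assms, of c] measure_distr[OF shifted_path_measurable assms, of 0]
    by (simp add: vimage_def Int_def conj_commute)
qed

lemma measure_Xp_shift: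
  assumes "B \<in> sets borel"
  shows "measure M {\<omega>\<in>space M. Xp (t + c) \<omega> \<in> B} = measure M {\<omega>\<in>space M. Xp t \<omega> \<in> B}"
proof -
  have "(\<lambda>p. fst p t) \<in> borel_measurable path_space"
    unfolding path_space_def by measurable
  then have S: "(\<lambda>p. fst p t) -` B \<inter> space path_space \<in> sets path_space"
    using assms by (rule measurable_sets)
  have "{\<omega>\<in>space M. shifted_path d \<omega> \<in> (\<lambda>p. fst p t) -` B \<inter> space path_space}
      = {\<omega>\<in>space M. Xp (t + d) \<omega> \<in> B}" for d
    using measurable_space[OF shifted_path_measurable, of _ d] by (auto simp: shifted_path_def)
  then show ?thesis using measure_shifted_path[OF S, of c] by simp
qed

lemma measure_cnt_shift:
  "measure M {\<omega>\<in>space M. P (cnt Ev (a + c) (b + c) \<omega>)} = measure M {\<omega>\<in>space M. P (cnt Ev a b \<omega>)}"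
proof -
  have "(\<lambda>p. snd p (a, b)) \<in> measurable path_space (count_space UNIV)"
    unfolding path_space_def by measurable
  then have S: "(\<lambda>p. snd p (a, b)) -` {k. P k} \<inter> space path_space \<in> sets path_space"
    by (rule measurable_sets) simp
  have "{\<omega>\<in>space M. shifted_path d \<omega> \<in> (\<lambda>p. snd p (a, b)) -` {k. P k} \<inter> space path_space}
      = {\<omega>\<in>space M. P (cnt Ev (a + d) (b + d) \<omega>)}" for d
    using measurable_space[OF shifted_path_measurable, of _ d] by (auto simp: shifted_path_def)
  then show ?thesis using measure_shifted_path[OF S, of c] by simp
qed

definition input_prob :: "real \<Rightarrow> real" where
  "input_prob x = measure M {\<omega>\<in>space M. Xp 0 \<omega> = x}"

lemma measure_Xp_eq: "measure M {\<omega>\<in>space M. Xp t \<omega> = x} = input_prob x"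
  using measure_Xp_shift[of "{x}" 0 t] unfolding input_prob_def by simp

lemma input_prob_nonneg: "0 \<le> input_prob x"
  unfolding input_prob_def by simp

lemma input_prob_outside: "x \<notin> set_pmf pX \<Longrightarrow> input_prob x = 0"
  unfolding input_prob_def using Xp_in_support by (metis (mono_tags, lifting) empty_Collect_eq measure_empty)

lemma measure_split_input:
  assumes C: "C \<in> sets M"
  shows "measure M C = (\<Sum>x\<in>set_pmf pX. measure M (C \<inter> {\<omega>\<in>space M. Xp s \<omega> = x}))"
proof -
  have "C = (\<Union>x\<in>set_pmf pX. C \<inter> {\<omega>\<in>space M. Xp s \<omega> = x})"
    using sets.sets_into_space[OF C] Xp_in_support by auto
  moreover have "measure M (\<Union>x\<in>set_pmf pX. C \<inter> {\<omega>\<in>space M. Xp s \<omega> = x})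
      = (\<Sum>x\<in>set_pmf pX. measure M (C \<inter> {\<omega>\<in>space M. Xp s \<omega> = x}))"
    by (rule finite_measure_finite_Union[OF finite_support])
      (auto simp: disjoint_family_on_def intro!: sets.Int C sets_Xp_eq)
  ultimately show ?thesis by simp
qed

lemma sum_input_prob: "(\<Sum>x\<in>set_pmf pX. input_prob x) = 1"
  using measure_split_input[OF sets.top, of 0] unfolding input_prob_def
  by (simp add: Int_absorb1 prob_space)

lemma measure_no_event_from_0:
  assumes "0 \<le> t"
  shows "measure M {\<omega>\<in>space M. cnt Ev 0 t \<omega> = 0} = (\<Sum>x\<in>set_pmf pX. input_prob x * exp (- x * t))"
proof -
  have "{\<omega>\<in>space M. cnt Ev 0 t \<omega> = 0} \<inter> {\<omega>\<in>space M. Xp 0 \<omega> = x}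
      = {\<omega>\<in>cond_set (space M) 0 x. cnt Ev 0 (0 + t) \<omega> = 0}" for x
    unfolding cond_set_def by auto
  moreover have "measure M (cond_set (space M) 0 x) = input_prob x" for x
    unfolding cond_set_def input_prob_def by simp
  ultimately show ?thesis
    using measure_split_input[OF sets_cnt, of "\<lambda>k. k = 0" 0 t 0] measure_no_event[OF history_space assms, of 0]
    by simp
qed

lemma measure_some_event_le:
  assumes A: "A \<in> history M Xp Ev s" and w: "0 \<le> w"
  shows "measure M {\<omega>\<in>A. cnt Ev s (s + w) \<omega> \<noteq> 0} \<le> measure M A * (xmax * w)"
proof -
  have As: "A \<in> sets M" using A history_subset_sets by blast
  define C where "C = {\<omega>\<in>A. cnt Ev s (s + w) \<omega> = 0}"
  have Cs: "C \<in> sets M"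
  proof -
    have "C = A \<inter> {\<omega>\<in>space M. cnt Ev s (s + w) \<omega> = 0}"
      unfolding C_def using sets.sets_into_space[OF As] by auto
    then show ?thesis using As sets_cnt by auto
  qed
  have cond: "C \<inter> {\<omega>\<in>space M. Xp s \<omega> = x} = {\<omega>\<in>cond_set A s x. cnt Ev s (s + w) \<omega> = 0}"
    "A \<inter> {\<omega>\<in>space M. Xp s \<omega> = x} = cond_set A s x" for x
    unfolding C_def cond_set_def using sets.sets_into_space[OF As] by auto
  have "measure M A * exp (- xmax * w) = (\<Sum>x\<in>set_pmf pX. measure M (cond_set A s x) * exp (- xmax * w))"
    using measure_split_input[OF As, of s] unfolding cond by (simp add: sum_distrib_right)
  also have "\<dots> \<le> (\<Sum>x\<in>set_pmf pX. measure M (cond_set A s x) * exp (- x * w))"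
    using le_xmax w by (intro sum_mono mult_left_mono) (auto simp: mult_right_mono)
  also have "\<dots> = measure M C"
    using measure_split_input[OF Cs, of s] measure_no_event[OF A w] unfolding cond by simp
  finally have "measure M A * exp (- xmax * w) \<le> measure M C" .
  moreover have "{\<omega>\<in>A. cnt Ev s (s + w) \<omega> \<noteq> 0} = A - C"
    unfolding C_def by auto
  then have "measure M {\<omega>\<in>A. cnt Ev s (s + w) \<omega> \<noteq> 0} = measure M A - measure M C"
    using finite_measure_Diff[OF As Cs] unfolding C_def by auto
  moreover have "measure M A * (1 - exp (- xmax * w)) \<le> measure M A * (xmax * w)"
    using exp_ge_add_one_self[of "- xmax * w"] by (intro mult_left_mono) auto
  ultimately show ?thesis by (simp add: algebra_simps)
qed

definition crowded :: "real \<Rightarrow> nat \<Rightarrow> 'w set" where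
  "crowded d n = {\<omega>\<in>space M. \<exists>k<n. 2 \<le> cnt Ev (grid d n k) (grid d n (Suc k)) \<omega>}"

definition first_event_cell :: "real \<Rightarrow> nat \<Rightarrow> nat \<Rightarrow> 'w set" where
  "first_event_cell d n k =
     {\<omega>\<in>space M. cnt Ev 0 (grid d n k) \<omega> = 0 \<and> cnt Ev (grid d n k) (grid d n (Suc k)) \<omega> \<noteq> 0}"

lemma sets_crowded: "crowded d n \<in> sets M"
proof -
  have "crowded d n = (\<Union>k\<in>{..<n}. {\<omega>\<in>space M. 2 \<le> cnt Ev (grid d n k) (grid d n (Suc k)) \<omega>})"
    unfolding crowded_def by auto
  then show ?thesis using sets_cnt by auto
qed

lemma first_event_cell_history:
  assumes "0 \<le> d"
  shows "first_event_cell d n k \<in> history M Xp Ev (grid d n (Suc k))"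
proof -
  interpret history: sigma_algebra "space M" "history M Xp Ev (grid d n (Suc k))"
    by (rule sigma_algebra_history)
  have "first_event_cell d n k = {\<omega>\<in>space M. cnt Ev 0 (grid d n k) \<omega> = 0}
      \<inter> {\<omega>\<in>space M. cnt Ev (grid d n k) (grid d n (Suc k)) \<omega> \<noteq> 0}"
    unfolding first_event_cell_def by auto
  moreover have "grid d n k \<le> grid d n (Suc k)" using grid_mono[OF assms] by simp
  ultimately show ?thesis
    using grid_nonneg[OF assms] by (auto intro!: history.Int history_cnt)
qed

lemma cnt_grid_sum:
  assumes "\<omega> \<in> space M" "0 \<le> d"
  shows "cnt Ev 0 (grid d n k) \<omega> = (\<Sum>i<k. cnt Ev (grid d n i) (grid d n (Suc i)) \<omega>)"
proof (induction k)
  case (Suc k)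
  have "cnt Ev 0 (grid d n (Suc k)) \<omega> = cnt Ev 0 (grid d n k) \<omega> + cnt Ev (grid d n k) (grid d n (Suc k)) \<omega>"
    using assms grid_nonneg grid_mono by (intro cnt_add) auto
  then show ?case using Suc by simp
qed (simp add: cnt_def grid_0)

lemma two_events_cases:
  assumes \<omega>: "\<omega> \<in> space M" and d: "0 < d" and n: "0 < n" and two: "2 \<le> cnt Ev 0 d \<omega>"
  shows "\<omega> \<in> crowded d n \<or> (\<exists>k<n. \<omega> \<in> first_event_cell d n k \<and> cnt Ev (grid d n (Suc k)) d \<omega> \<noteq> 0)"
proof -
  let ?c = "\<lambda>i. cnt Ev (grid d n i) (grid d n (Suc i)) \<omega>"
  have "2 \<le> (\<Sum>i<n. ?c i)"
    using cnt_grid_sum[OF \<omega>, of d n n] d two grid_last[OF n] by simp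
  then have ex: "\<exists>i. i < n \<and> ?c i \<noteq> 0"
    by (metis (no_types, lifting) lessThan_iff not_numeral_le_zero sum.neutral)
  define k where "k = (LEAST i. i < n \<and> ?c i \<noteq> 0)"
  have k: "k < n" "?c k \<noteq> 0" using LeastI_ex[OF ex] unfolding k_def by auto
  have "?c i = 0" if "i < k" for i
    using not_less_Least[of i "\<lambda>i. i < n \<and> ?c i \<noteq> 0"] that k(1) unfolding k_def by auto
  then have before: "cnt Ev 0 (grid d n k) \<omega> = 0" using cnt_grid_sum[OF \<omega>, of d n k] d by simp
  show ?thesis
  proof (cases "2 \<le> ?c k")
    case True then show ?thesis using \<omega> k unfolding crowded_def by auto
  next
    case False
    have "cnt Ev 0 (grid d n (Suc k)) \<omega> = 1"
      using cnt_grid_sum[OF \<omega>, of d n "Suc k"] cnt_grid_sum[OF \<omega>, of d n k] d before False k(2) by simp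
    moreover have "cnt Ev 0 d \<omega> = cnt Ev 0 (grid d n (Suc k)) \<omega> + cnt Ev (grid d n (Suc k)) d \<omega>"
      using \<omega> d k(1) grid_nonneg grid_le by (intro cnt_add) auto
    ultimately have "cnt Ev (grid d n (Suc k)) d \<omega> \<noteq> 0" using two by simp
    moreover have "\<omega> \<in> first_event_cell d n k" unfolding first_event_cell_def using \<omega> before k by auto
    ultimately show ?thesis using k by auto
  qed
qed

lemma first_event_cell_disjoint:
  assumes "0 \<le> d"
  shows "disjoint_family_on (first_event_cell d n) {..<n}"
proof -
  have "first_event_cell d n k \<inter> first_event_cell d n k' = {}" if "k < k'" for k k'
  proof -
    have "cnt Ev (grid d n k) (grid d n (Suc k)) \<omega> \<le> cnt Ev 0 (grid d n k') \<omega>" if "\<omega> \<in> space M" for \<omega>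
      using that assms \<open>k < k'\<close> grid_nonneg grid_mono by (intro cnt_mono) auto
    then show ?thesis unfolding first_event_cell_def by fastforce
  qed
  then show ?thesis
    unfolding disjoint_family_on_def by (metis Int_commute linorder_neqE_nat)
qed

lemma sets_first_event_cell: "0 \<le> d \<Longrightarrow> first_event_cell d n k \<in> sets M"
  using first_event_cell_history[of d n k] history_subset_sets by auto

lemma sum_measure_first_event_cell_le:
  assumes d: "0 < d"
  shows "(\<Sum>k<n. measure M (first_event_cell d n k)) \<le> xmax * d"
proof -
  have "(\<Union>k<n. first_event_cell d n k) \<subseteq> {\<omega>\<in>space M. cnt Ev 0 (0 + d) \<omega> \<noteq> 0}"
  proof
    fix \<omega> assume "\<omega> \<in> (\<Union>k<n. first_event_cell d n k)"
    then obtain k where k: "k < n" "\<omega> \<in> first_event_cell d n k" by auto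
    then have "cnt Ev (grid d n k) (grid d n (Suc k)) \<omega> \<le> cnt Ev 0 d \<omega>"
      using d grid_nonneg grid_le unfolding first_event_cell_def by (intro cnt_mono) auto
    then show "\<omega> \<in> {\<omega>\<in>space M. cnt Ev 0 (0 + d) \<omega> \<noteq> 0}"
      using k unfolding first_event_cell_def by auto
  qed
  then have "measure M (\<Union>k<n. first_event_cell d n k) \<le> measure M {\<omega>\<in>space M. cnt Ev 0 (0 + d) \<omega> \<noteq> 0}"
    using sets_first_event_cell d sets_cnt by (intro finite_measure_mono) auto
  also have "\<dots> \<le> xmax * d"
    using measure_some_event_le[OF history_space, of d 0] d by (simp add: prob_space)
  finally show ?thesis
    using sets_first_event_cell first_event_cell_disjoint d by (subst finite_measure_finite_Union[symmetric]) auto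
qed

lemma measure_event_after_first_event_cell_le:
  assumes d: "0 < d" and k: "k < n"
  shows "measure M {\<omega>\<in>first_event_cell d n k. cnt Ev (grid d n (Suc k)) d \<omega> \<noteq> 0}
    \<le> measure M (first_event_cell d n k) * (xmax * d)"
proof -
  have le: "grid d n (Suc k) \<le> d" using grid_le d k by simp
  have "measure M {\<omega>\<in>first_event_cell d n k. cnt Ev (grid d n (Suc k)) d \<omega> \<noteq> 0}
      \<le> measure M (first_event_cell d n k) * (xmax * (d - grid d n (Suc k)))"
    using measure_some_event_le[OF first_event_cell_history, of d "d - grid d n (Suc k)" n k] d le by simp
  also have "\<dots> \<le> measure M (first_event_cell d n k) * (xmax * d)"
    using grid_nonneg[of d n "Suc k"] d xmax_pos by (intro mult_left_mono) auto
  finally show ?thesis .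
qed

lemma measure_two_events_le_crowded:
  assumes d: "0 < d" and n: "0 < n"
  shows "measure M {\<omega>\<in>space M. 2 \<le> cnt Ev 0 d \<omega>} \<le> measure M (crowded d n) + (xmax * d)\<^sup>2"
proof -
  define H where "H k = {\<omega>\<in>first_event_cell d n k. cnt Ev (grid d n (Suc k)) d \<omega> \<noteq> 0}" for k
  have H: "H k \<in> sets M" for k
  proof -
    have "H k = first_event_cell d n k \<inter> {\<omega>\<in>space M. cnt Ev (grid d n (Suc k)) d \<omega> \<noteq> 0}"
      unfolding H_def first_event_cell_def by auto
    then show ?thesis using sets_first_event_cell d sets_cnt by auto
  qed
  have "\<omega> \<in> crowded d n \<union> (\<Union>k<n. H k)" if "\<omega> \<in> space M" "2 \<le> cnt Ev 0 d \<omega>" for \<omega>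
    using two_events_cases[OF that(1) d n that(2)] unfolding H_def by auto
  then have "{\<omega>\<in>space M. 2 \<le> cnt Ev 0 d \<omega>} \<subseteq> crowded d n \<union> (\<Union>k<n. H k)"
    by blast
  then have "measure M {\<omega>\<in>space M. 2 \<le> cnt Ev 0 d \<omega>} \<le> measure M (crowded d n \<union> (\<Union>k<n. H k))"
    using sets_crowded H by (intro finite_measure_mono) auto
  also have "\<dots> \<le> measure M (crowded d n) + measure M (\<Union>k<n. H k)"
    using sets_crowded H by (intro measure_Un_le) auto
  also have "measure M (\<Union>k<n. H k) \<le> (\<Sum>k<n. measure M (H k))"
    using H by (intro finite_measure_subadditive_finite) auto
  also have "\<dots> \<le> (\<Sum>k<n. measure M (first_event_cell d n k)) * (xmax * d)"
    unfolding sum_distrib_right H_def using measure_event_after_first_event_cell_le[OF d]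
    by (intro sum_mono) simp
  also have "\<dots> \<le> (xmax * d) * (xmax * d)"
    using sum_measure_first_event_cell_le[OF d] xmax_pos d by (intro mult_right_mono) auto
  finally show ?thesis by (simp add: power2_eq_square)
qed

text \<open>Events are locally finite, so a fine enough grid separates them.\<close>
lemma eventually_not_crowded:
  assumes \<omega>: "\<omega> \<in> space M" and d: "0 < d"
  shows "\<exists>N. \<forall>n\<ge>N. \<omega> \<notin> crowded d n"
proof -
  define F where "F = Ev \<omega> \<inter> {0<..d}"
  have F: "finite F" unfolding F_def using finite_events_Ioc[OF \<omega>] .
  define gaps where "gaps = insert 1 ((\<lambda>(a, b). b - a) ` {(a, b) \<in> F \<times> F. a < b})"
  define gap where "gap = Min gaps"
  have gaps: "finite gaps"
    unfolding gaps_def using F by (auto intro: finite_subset[of _ "F \<times> F"])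
  have gap_pos: "0 < gap"
    unfolding gap_def using gaps by (auto simp: gaps_def)
  have gap_le: "gap \<le> b - a" if "a \<in> F" "b \<in> F" "a < b" for a b
    unfolding gap_def using gaps that by (intro Min_le) (auto simp: gaps_def)
  obtain N :: nat where N: "d / gap < real N" using reals_Archimedean2 by blast
  then have N_pos: "0 < real N" using d gap_pos by (smt (verit) divide_pos_pos)
  have "\<omega> \<notin> crowded d n" if "N \<le> n" for n
  proof
    assume "\<omega> \<in> crowded d n"
    then obtain k where k: "k < n" "2 \<le> card (Ev \<omega> \<inter> {grid d n k<..grid d n (Suc k)})"
      unfolding crowded_def cnt_def by auto
    then obtain a b where ab: "a \<in> Ev \<omega> \<inter> {grid d n k<..grid d n (Suc k)}"
      "b \<in> Ev \<omega> \<inter> {grid d n k<..grid d n (Suc k)}" "a < b"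
      using card_le_Suc0_iff_eq[OF finite_events_Ioc[OF \<omega>]] by (metis linorder_neqE not_less_eq_eq numeral_2_eq_2)
    have "a \<in> F" "b \<in> F"
      using ab grid_nonneg[of d n k] grid_le[of d "Suc k" n] d k unfolding F_def by auto
    then have "gap \<le> b - a" using gap_le ab by simp
    also have "b - a < d / real n" using ab grid_Suc_diff[of n d k] k by auto
    also have "d / real n \<le> d / real N"
      using N_pos d that by (intro divide_left_mono) auto
    also have "d / real N < gap" using N gap_pos N_pos by (simp add: field_simps)
    finally have "gap < gap" .
    then show False by simp
  qed
  then show ?thesis by blast
qed

lemma measure_two_events_le:
  assumes d: "0 < d"
  shows "measure M {\<omega>\<in>space M. 2 \<le> cnt Ev 0 d \<omega>} \<le> (xmax * d)\<^sup>2"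
proof -
  define E where "E j = (\<Union>i. crowded d (Suc (i + j)))" for j
  have E: "range E \<subseteq> sets M" unfolding E_def using sets_crowded by auto
  have "decseq E" unfolding decseq_def E_def
  proof (intro allI impI subsetI)
    fix m n \<omega> assume "m \<le> n" "\<omega> \<in> (\<Union>i. crowded d (Suc (i + n)))"
    then obtain i where "\<omega> \<in> crowded d (Suc ((i + (n - m)) + m))" by auto
    then show "\<omega> \<in> (\<Union>i. crowded d (Suc (i + m)))" by blast
  qed
  moreover have "\<omega> \<notin> (\<Inter>j. E j)" for \<omega>
  proof
    assume \<omega>: "\<omega> \<in> (\<Inter>j. E j)"
    then have "\<omega> \<in> space M" unfolding E_def crowded_def by blast
    then obtain N where N: "\<And>n. N \<le> n \<Longrightarrow> \<omega> \<notin> crowded d n"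
      using eventually_not_crowded d by blast
    from \<omega> obtain i where "\<omega> \<in> crowded d (Suc (i + N))" unfolding E_def by blast
    then show False using N[of "Suc (i + N)"] by simp
  qed
  then have "(\<Inter>j. E j) = {}" by blast
  ultimately have lim: "(\<lambda>j. measure M (E j) + (xmax * d)\<^sup>2) \<longlonglongrightarrow> 0 + (xmax * d)\<^sup>2"
    using finite_Lim_measure_decseq[OF E] by (intro tendsto_add tendsto_const) simp
  moreover have "measure M {\<omega>\<in>space M. 2 \<le> cnt Ev 0 d \<omega>} \<le> measure M (E j) + (xmax * d)\<^sup>2" for j
  proof -
    have "crowded d (Suc (0 + j)) \<subseteq> E j" unfolding E_def by (rule UN_upper) simp
    then have "measure M (crowded d (Suc j)) \<le> measure M (E j)"
      using E by (intro finite_measure_mono) auto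
    then show ?thesis using measure_two_events_le_crowded[OF d, of "Suc j"] by simp
  qed
  ultimately show ?thesis using LIMSEQ_le_const[OF lim] by auto
qed

lemma measure_cond_set_space: "measure M (cond_set (space M) 0 x) = input_prob x"
  unfolding cond_set_def input_prob_def by simp

definition event_rate :: real where
  "event_rate = (\<Sum>x\<in>set_pmf pX. input_prob x * x)"

text \<open>Paths started in \<open>x'\<close> whose first event lies in \<open>(0,d]\<close> and switches the input to \<open>x\<close>.
  Measurability of that set is only known when \<open>input_prob x' > 0\<close>; otherwise the null set
  \<open>{X\<^sub>0 = x'}\<close> serves as a cover.\<close>
definition switch_set :: "real \<Rightarrow> real \<Rightarrow> real \<Rightarrow> 'w set" where
  "switch_set d x x' =
     (if 0 < input_prob x' then wait_switch_set (space M) 0 x' 0 x - wait_switch_set (space M) 0 x' d x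
      else {\<omega>\<in>space M. Xp 0 \<omega> = x'})"

lemma switch_set_law:
  assumes x: "x \<in> set_pmf pX" and d: "0 \<le> d"
  shows "switch_set d x x' \<in> sets M"
    and "measure M (switch_set d x x') \<le> input_prob x' * pmf pX x * (1 - exp (- x' * d))"
proof -
  have "switch_set d x x' \<in> sets M \<and>
      measure M (switch_set d x x') \<le> input_prob x' * pmf pX x * (1 - exp (- x' * d))"
  proof (cases "0 < input_prob x'")
    case True
    then have pos: "0 < measure M (cond_set (space M) 0 x')" using measure_cond_set_space by simp
    note sets = sets_wait_switch_set[OF history_space order_refl x pos] sets_wait_switch_set[OF history_space d x pos]
    have "wait_switch_set (space M) 0 x' d x \<subseteq> wait_switch_set (space M) 0 x' 0 x"
      unfolding wait_switch_set_def wait_set_def using d by auto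
    then have "measure M (switch_set d x x')
        = measure M (wait_switch_set (space M) 0 x' 0 x) - measure M (wait_switch_set (space M) 0 x' d x)"
      unfolding switch_set_def using True finite_measure_Diff[OF sets] by simp
    also have "\<dots> = input_prob x' * pmf pX x * (1 - exp (- x' * d))"
      using measure_wait_switch_set[OF history_space order_refl] measure_wait_switch_set[OF history_space d]
      by (simp add: measure_cond_set_space algebra_simps)
    finally show ?thesis unfolding switch_set_def using True sets by auto
  next
    case False
    then have "input_prob x' = 0" using input_prob_nonneg[of x'] by simp
    then show ?thesis unfolding switch_set_def input_prob_def using sets_Xp_eq by simp
  qed
  then show "switch_set d x x' \<in> sets M"
    and "measure M (switch_set d x x') \<le> input_prob x' * pmf pX x * (1 - exp (- x' * d))"
    by simp_all
qed

lemma Xp_window_cases: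
  assumes \<omega>: "\<omega> \<in> space M" and x: "Xp d \<omega> = x" and d: "0 < d"
  shows "\<omega> \<in> {\<omega>\<in>cond_set (space M) 0 x. cnt Ev 0 (0 + d) \<omega> = 0}
    \<union> (\<Union>x'\<in>set_pmf pX. switch_set d x x') \<union> {\<omega>\<in>space M. 2 \<le> cnt Ev 0 d \<omega>}"
proof -
  consider "cnt Ev 0 d \<omega> = 0" | "cnt Ev 0 d \<omega> = 1" | "2 \<le> cnt Ev 0 d \<omega>" by linarith
  then show ?thesis
  proof cases
    case 1
    then have "Xp 0 \<omega> = Xp d \<omega>" using cnt_eq_0_iff[OF \<omega>] Xp_eq_if_no_events[OF \<omega>] d by simp
    then show ?thesis using \<omega> x 1 unfolding cond_set_def by simp
  next
    case 2
    then obtain e where e: "e \<in> Ev \<omega>" "0 < e" "e \<le> d" using cnt_eq_0_iff[OF \<omega>, of 0 d] by auto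
    then have ne: "Ev \<omega> \<inter> {0<..} \<noteq> {}" by auto
    define T where "T = next_event Ev 0 \<omega>"
    have T: "T \<in> Ev \<omega>" "0 < T" "T \<le> e" using next_event_least[OF \<omega> ne] e unfolding T_def by auto
    have "Ev \<omega> \<inter> {T<..d} = {}"
    proof (rule ccontr)
      assume "Ev \<omega> \<inter> {T<..d} \<noteq> {}"
      then obtain e' where e': "e' \<in> Ev \<omega>" "T < e'" "e' \<le> d" by auto
      then have "{T, e'} \<subseteq> Ev \<omega> \<inter> {0<..d}" using T e by auto
      then have "card {T, e'} \<le> cnt Ev 0 d \<omega>" unfolding cnt_def by (intro card_mono finite_events_Ioc[OF \<omega>])
      then show False using 2 e' by simp
    qed
    moreover have "T \<le> d" using T e by linarith
    ultimately have XT: "Xp T \<omega> = x" using Xp_eq_if_no_events[OF \<omega>, of T d] x by simp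
    have "\<omega> \<in> switch_set d x (Xp 0 \<omega>)"
      using \<omega> ne T XT e unfolding switch_set_def wait_switch_set_def wait_set_def cond_set_def T_def by auto
    then show ?thesis using Xp_in_support[OF \<omega>] by blast
  next
    case 3
    then show ?thesis using \<omega> by simp
  qed
qed

lemma balance_ineq_window:
  assumes x: "x \<in> set_pmf pX" and d: "0 < d"
  shows "input_prob x * (1 - exp (- x * d)) \<le> d * (pmf pX x * event_rate + xmax\<^sup>2 * d)"
proof -
  define F1 where "F1 = {\<omega>\<in>cond_set (space M) 0 x. cnt Ev 0 (0 + d) \<omega> = 0}"
  define F2 where "F2 = (\<Union>x'\<in>set_pmf pX. switch_set d x x')"
  define F3 where "F3 = {\<omega>\<in>space M. 2 \<le> cnt Ev 0 d \<omega>}"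
  have F1: "F1 \<in> sets M"
  proof -
    have "F1 = {\<omega>\<in>space M. Xp 0 \<omega> = x} \<inter> {\<omega>\<in>space M. cnt Ev 0 (0 + d) \<omega> = 0}"
      unfolding F1_def cond_set_def by auto
    then show ?thesis using sets_Xp_eq sets_cnt by auto
  qed
  have F2: "F2 \<in> sets M" unfolding F2_def using switch_set_law(1)[OF x] d finite_support by auto
  have F3: "F3 \<in> sets M" unfolding F3_def by (rule sets_cnt)
  have "input_prob x = measure M {\<omega>\<in>space M. Xp d \<omega> = x}" using measure_Xp_eq by simp
  also have "\<dots> \<le> measure M (F1 \<union> F2 \<union> F3)"
    using Xp_window_cases[OF _ _ d] F1 F2 F3 unfolding F1_def F2_def F3_def
    by (intro finite_measure_mono) auto
  also have "\<dots> \<le> measure M F1 + measure M F2 + measure M F3"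
    using F1 F2 F3 measure_Un_le by (smt (verit) sets.Un)
  also have "measure M F1 = input_prob x * exp (- x * d)"
    unfolding F1_def using measure_no_event[OF history_space, of d 0 x] d measure_cond_set_space by simp
  also have "measure M F2 \<le> (\<Sum>x'\<in>set_pmf pX. measure M (switch_set d x x'))"
    unfolding F2_def using switch_set_law(1)[OF x] d
    by (intro finite_measure_subadditive_finite[OF finite_support]) auto
  also have "\<dots> \<le> (\<Sum>x'\<in>set_pmf pX. input_prob x' * pmf pX x * (x' * d))"
  proof (rule sum_mono)
    fix x' assume "x' \<in> set_pmf pX"
    have "input_prob x' * pmf pX x * (1 - exp (- x' * d)) \<le> input_prob x' * pmf pX x * (x' * d)"
      using exp_ge_add_one_self[of "- x' * d"] input_prob_nonneg by (intro mult_left_mono) auto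
    then show "measure M (switch_set d x x') \<le> input_prob x' * pmf pX x * (x' * d)"
      using switch_set_law(2)[OF x, of d x'] d by simp
  qed
  also have "(\<Sum>x'\<in>set_pmf pX. input_prob x' * pmf pX x * (x' * d)) = pmf pX x * event_rate * d"
    unfolding event_rate_def by (simp add: sum_distrib_left sum_distrib_right algebra_simps)
  also have "measure M F3 \<le> (xmax * d)\<^sup>2" unfolding F3_def by (rule measure_two_events_le[OF d])
  finally show ?thesis by (simp add: algebra_simps power2_eq_square)
qed

lemma balance_ineq:
  assumes x: "x \<in> set_pmf pX"
  shows "input_prob x * x \<le> pmf pX x * event_rate"
proof (rule tendsto_le[OF trivial_limit_at_right_real])
  show "((\<lambda>d. pmf pX x * event_rate + xmax\<^sup>2 * d) \<longlongrightarrow> pmf pX x * event_rate) (at_right 0)"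
    by (auto intro!: tendsto_eq_intros)
  show "((\<lambda>d. input_prob x * ((1 - exp (- x * d)) / d)) \<longlongrightarrow> input_prob x * x) (at_right 0)"
    by (intro tendsto_mult tendsto_const tendsto_one_minus_exp_div)
  show "\<forall>\<^sub>F d in at_right 0. input_prob x * ((1 - exp (- x * d)) / d) \<le> pmf pX x * event_rate + xmax\<^sup>2 * d"
    using eventually_at_right_less
  proof (rule eventually_mono)
    fix d :: real assume "0 < d"
    then show "input_prob x * ((1 - exp (- x * d)) / d) \<le> pmf pX x * event_rate + xmax\<^sup>2 * d"
      using balance_ineq_window[OF x] by (simp add: pos_divide_le_eq mult.commute)
  qed
qed

text \<open>Summing the inequalities over \<open>x\<close> gives equality on both sides, so none can be strict.\<close>
lemma balance_eq:
  assumes x: "x \<in> set_pmf pX"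
  shows "input_prob x * x = pmf pX x * event_rate"
proof (rule ccontr)
  assume "input_prob x * x \<noteq> pmf pX x * event_rate"
  then have "input_prob x * x < pmf pX x * event_rate" using balance_ineq[OF x] by simp
  then have "(\<Sum>x\<in>set_pmf pX. input_prob x * x) < (\<Sum>x\<in>set_pmf pX. pmf pX x * event_rate)"
    using balance_ineq x by (intro sum_strict_mono_ex1[OF finite_support]) auto
  then show False unfolding event_rate_def sum_distrib_right[symmetric] sum_pmf by simp
qed

lemma input_prob_eq: "input_prob x = (1 / x) * pmf pX x / mean_inv"
proof (cases "x \<in> set_pmf pX")
  case False
  then show ?thesis using input_prob_outside by (simp add: set_pmf_iff)
next
  case True
  have prob: "input_prob y = event_rate * ((1 / y) * pmf pX y)" if "y \<in> set_pmf pX" for y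
    using balance_eq[OF that] pos_of_support[OF that] by (simp add: field_simps)
  have "1 = (\<Sum>y\<in>set_pmf pX. input_prob y)" using sum_input_prob by simp
  also have "\<dots> = event_rate * mean_inv"
    unfolding mean_inv_eq_sum sum_distrib_left using prob by simp
  finally have "event_rate = 1 / mean_inv" using mean_inv_pos by (simp add: field_simps)
  then show ?thesis using prob[OF True] by simp
qed

lemma expectation_Xp_ln_Xp:
  "expectation (\<lambda>\<omega>. Xp t \<omega> * ln (Xp t \<omega>)) = measure_pmf.expectation pX ln / mean_inv"
proof -
  let ?I = "\<lambda>x. indicator {\<omega>\<in>space M. Xp t \<omega> = x} :: 'w \<Rightarrow> real"
  have "expectation (\<lambda>\<omega>. Xp t \<omega> * ln (Xp t \<omega>)) = expectation (\<lambda>\<omega>. \<Sum>x\<in>set_pmf pX. x * ln x * ?I x \<omega>)"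
  proof (rule Bochner_Integration.integral_cong[OF refl])
    fix \<omega> assume \<omega>: "\<omega> \<in> space M"
    have "(\<Sum>x\<in>set_pmf pX. x * ln x * ?I x \<omega>) = (\<Sum>x\<in>set_pmf pX. if x = Xp t \<omega> then x * ln x else 0)"
      by (rule sum.cong) (auto simp: indicator_def \<omega>)
    then show "Xp t \<omega> * ln (Xp t \<omega>) = (\<Sum>x\<in>set_pmf pX. x * ln x * ?I x \<omega>)"
      using Xp_in_support[OF \<omega>] finite_support by (simp add: sum.delta)
  qed
  also have "\<dots> = (\<Sum>x\<in>set_pmf pX. x * ln x * input_prob x)"
    using measure_Xp_eq sets_Xp_eq by (simp add: emeasure_eq_measure)
  also have "\<dots> = (\<Sum>x\<in>set_pmf pX. ln x * pmf pX x) / mean_inv"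
    unfolding input_prob_eq sum_divide_distrib
    by (rule sum.cong) (auto dest!: pos_of_support simp: field_simps)
  finally show ?thesis unfolding expectation_eq_sum .
qed

lemma events_in_Icc_iff:
  assumes \<omega>: "\<omega> \<in> space M"
  shows "Ev \<omega> \<inter> {a..b} \<noteq> {} \<longleftrightarrow> (\<forall>m::nat. cnt Ev (a - 1 / real (Suc m)) b \<omega> \<noteq> 0)"
proof
  assume "Ev \<omega> \<inter> {a..b} \<noteq> {}"
  then obtain e where "e \<in> Ev \<omega>" "a \<le> e" "e \<le> b" by auto
  moreover have "a - 1 / real (Suc m) < a" for m :: nat by simp
  ultimately show "\<forall>m::nat. cnt Ev (a - 1 / real (Suc m)) b \<omega> \<noteq> 0"
    unfolding cnt_eq_0_iff[OF \<omega>] by (metis IntI empty_iff greaterThanAtMost_iff order_less_le_trans)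
next
  assume all: "\<forall>m::nat. cnt Ev (a - 1 / real (Suc m)) b \<omega> \<noteq> 0"
  show "Ev \<omega> \<inter> {a..b} \<noteq> {}"
  proof
    assume empty: "Ev \<omega> \<inter> {a..b} = {}"
    define F where "F = Ev \<omega> \<inter> {a - 1<..b}"
    have F: "finite F" "F \<noteq> {}"
      unfolding F_def using finite_events_Ioc[OF \<omega>] all[rule_format, of 0] cnt_eq_0_iff[OF \<omega>] by auto
    have "f < a" if "f \<in> F" for f using that empty unfolding F_def by force
    then have max: "Max F < a" using Max_in[OF F] by blast
    obtain m :: nat where "1 / (a - Max F) < real (Suc m)"
      using reals_Archimedean2[of "1 / (a - Max F)"] by (metis less_Suc_eq of_nat_less_iff order_less_trans)
    then have m: "1 / real (Suc m) < a - Max F" using max by (simp add: field_simps)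
    obtain e where e: "e \<in> Ev \<omega>" "a - 1 / real (Suc m) < e" "e \<le> b"
      using all[rule_format, of m] cnt_eq_0_iff[OF \<omega>] by auto
    moreover have "1 / real (Suc m) \<le> 1" by simp
    then have "a - 1 < e" using e(2) by linarith
    ultimately have "e \<in> F" unfolding F_def by auto
    then show False using Max_ge[OF F(1)] e m by fastforce
  qed
qed

lemma sets_events_in_Icc: "{\<omega>\<in>space M. Ev \<omega> \<inter> {a..b} \<noteq> {}} \<in> sets M"
proof -
  have "{\<omega>\<in>space M. Ev \<omega> \<inter> {a..b} \<noteq> {}} = (\<Inter>m::nat. {\<omega>\<in>space M. cnt Ev (a - 1 / real (Suc m)) b \<omega> \<noteq> 0})"
  proof (intro equalityI subsetI)
    fix \<omega> assume "\<omega> \<in> {\<omega>\<in>space M. Ev \<omega> \<inter> {a..b} \<noteq> {}}"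
    then show "\<omega> \<in> (\<Inter>m::nat. {\<omega>\<in>space M. cnt Ev (a - 1 / real (Suc m)) b \<omega> \<noteq> 0})"
      using events_in_Icc_iff[of \<omega> a b] by blast
  next
    fix \<omega> assume \<omega>: "\<omega> \<in> (\<Inter>m::nat. {\<omega>\<in>space M. cnt Ev (a - 1 / real (Suc m)) b \<omega> \<noteq> 0})"
    then have "\<omega> \<in> space M" by blast
    then show "\<omega> \<in> {\<omega>\<in>space M. Ev \<omega> \<inter> {a..b} \<noteq> {}}"
      using \<omega> events_in_Icc_iff[of \<omega> a b] by blast
  qed
  then show ?thesis using sets_cnt by auto
qed

lemma measure_event_at: "measure M {\<omega>\<in>space M. u \<in> Ev \<omega>} = 0"
proof -
  have "measure M {\<omega>\<in>space M. u \<in> Ev \<omega>} \<le> 0 + e" if e: "0 < e" for e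
  proof -
    define h where "h = e / xmax"
    have h: "0 < h" unfolding h_def using e xmax_pos by simp
    have "cnt Ev (u - h) u \<omega> \<noteq> 0" if "\<omega> \<in> space M" "u \<in> Ev \<omega>" for \<omega>
      using that cnt_eq_0_iff[OF that(1), of "u - h" u] h by auto
    then have "{\<omega>\<in>space M. u \<in> Ev \<omega>} \<subseteq> {\<omega>\<in>space M. cnt Ev (0 + (u - h)) (h + (u - h)) \<omega> \<noteq> 0}"
      by auto
    then have "measure M {\<omega>\<in>space M. u \<in> Ev \<omega>} \<le> measure M {\<omega>\<in>space M. cnt Ev (0 + (u - h)) (h + (u - h)) \<omega> \<noteq> 0}"
      using sets_cnt by (intro finite_measure_mono) auto
    also have "\<dots> = measure M {\<omega>\<in>space M. cnt Ev 0 (0 + h) \<omega> \<noteq> 0}"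
      using measure_cnt_shift[of "\<lambda>k. k \<noteq> 0" 0 "u - h" h] by simp
    also have "\<dots> \<le> xmax * h"
      using measure_some_event_le[OF history_space, of h 0] h by (simp add: prob_space)
    finally show ?thesis unfolding h_def using xmax_pos by simp
  qed
  then show ?thesis by (meson antisym field_le_epsilon measure_nonneg)
qed

lemma AE_no_event_at: "AE \<omega> in M. u \<notin> Ev \<omega>"
proof -
  have "{\<omega>\<in>space M. u \<in> Ev \<omega>} \<in> sets M" using sets_events_in_Icc[of u u] by simp
  then show ?thesis using prob_Collect_eq_0 measure_event_at[of u] by simp
qed

definition past_window :: "real \<Rightarrow> 'w set" where
  "past_window t = {\<omega>\<in>space M. Ev \<omega> \<inter> {-t..<0} \<noteq> {}}"

definition no_past_event :: "'w set" where
  "no_past_event = {\<omega>\<in>space M. Ev \<omega> \<inter> {..<0} = {}}"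

lemma sets_past_window: "past_window t \<in> sets M"
proof -
  have "past_window t = (\<Union>k::nat. {\<omega>\<in>space M. Ev \<omega> \<inter> {-t.. - 1 / real (Suc k)} \<noteq> {}})"
  proof (intro equalityI subsetI)
    fix \<omega> assume "\<omega> \<in> past_window t"
    then obtain e where e: "\<omega> \<in> space M" "e \<in> Ev \<omega>" "-t \<le> e" "e < 0" unfolding past_window_def by auto
    obtain k :: nat where "1 / (- e) < real (Suc k)"
      using reals_Archimedean2[of "1 / (- e)"] by (metis less_Suc_eq of_nat_less_iff order_less_trans)
    then have "1 / real (Suc k) < - e" using e by (simp add: field_simps)
    then have "e \<in> Ev \<omega> \<inter> {-t.. - 1 / real (Suc k)}" using e by auto
    then show "\<omega> \<in> (\<Union>k::nat. {\<omega>\<in>space M. Ev \<omega> \<inter> {-t.. - 1 / real (Suc k)} \<noteq> {}})" using e by blast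
  next
    fix \<omega> assume "\<omega> \<in> (\<Union>k::nat. {\<omega>\<in>space M. Ev \<omega> \<inter> {-t.. - 1 / real (Suc k)} \<noteq> {}})"
    then obtain k :: nat and e where ke: "\<omega> \<in> space M" "e \<in> Ev \<omega>" "-t \<le> e" "e \<le> - 1 / real (Suc k)"
      by auto
    have "- 1 / real (Suc k) < 0" by simp
    with ke(4) have "e < 0" by linarith
    then show "\<omega> \<in> past_window t" unfolding past_window_def using ke by auto
  qed
  then show ?thesis using sets_events_in_Icc by auto
qed

lemma sets_no_past_event: "no_past_event \<in> sets M"
proof -
  have "no_past_event = space M - (\<Union>k::nat. past_window (real k))"
  proof (intro equalityI subsetI)
    fix \<omega> assume \<omega>: "\<omega> \<in> space M - (\<Union>k::nat. past_window (real k))"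
    have "e \<notin> Ev \<omega>" if "e < 0" for e
    proof
      assume "e \<in> Ev \<omega>"
      obtain k :: nat where "- e < real k" using reals_Archimedean2 by blast
      then have "\<omega> \<in> past_window (real k)" unfolding past_window_def using \<omega> \<open>e \<in> Ev \<omega>\<close> that by force
      then show False using \<omega> by blast
    qed
    then show "\<omega> \<in> no_past_event" unfolding no_past_event_def using \<omega> by auto
  qed (auto simp: no_past_event_def past_window_def)
  then show ?thesis using sets_past_window by auto
qed

lemma measure_no_event_before_0:
  assumes "0 \<le> t"
  shows "measure M {\<omega>\<in>space M. cnt Ev (-t) 0 \<omega> = 0} = (\<Sum>x\<in>set_pmf pX. input_prob x * exp (- x * t))"
  using measure_cnt_shift[of "\<lambda>k. k = 0" 0 "-t" t] measure_no_event_from_0[OF assms] by simp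

lemma AE_some_past_event: "AE \<omega> in M. Ev \<omega> \<inter> {..<0} \<noteq> {}"
proof -
  have "measure M no_past_event \<le> exp (- xmin) ^ k" for k
  proof -
    have "Ev \<omega> \<inter> {- (real k + 1)<..-1} = {}" if "\<omega> \<in> no_past_event" for \<omega>
      using that unfolding no_past_event_def by force
    then have "no_past_event \<subseteq> {\<omega>\<in>space M. cnt Ev (0 + - (real k + 1)) (real k + - (real k + 1)) \<omega> = 0}"
      using cnt_eq_0_iff unfolding no_past_event_def by auto
    then have "measure M no_past_event
        \<le> measure M {\<omega>\<in>space M. cnt Ev (0 + - (real k + 1)) (real k + - (real k + 1)) \<omega> = 0}"
      using sets_cnt by (intro finite_measure_mono) auto
    also have "\<dots> = (\<Sum>x\<in>set_pmf pX. input_prob x * exp (- x * real k))"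
      using measure_cnt_shift[of "\<lambda>n. n = 0" 0 "- (real k + 1)" "real k"] measure_no_event_from_0[of "real k"]
      by simp
    also have "\<dots> \<le> (\<Sum>x\<in>set_pmf pX. input_prob x * exp (- xmin * real k))"
      using xmin_le input_prob_nonneg by (intro sum_mono mult_left_mono) (auto simp: mult_right_mono)
    also have "\<dots> = exp (- xmin) ^ k"
      using sum_input_prob by (simp add: sum_distrib_right[symmetric] exp_of_nat_mult[symmetric] mult.commute)
    finally show ?thesis .
  qed
  moreover have "(\<lambda>k. exp (- xmin) ^ k) \<longlonglongrightarrow> 0"
    using xmin_pos by (intro LIMSEQ_power_zero) simp
  ultimately have "measure M no_past_event \<le> 0"
    by (intro LIMSEQ_le_const[where X = "\<lambda>k. exp (- xmin) ^ k"]) auto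
  then have "measure M no_past_event = 0" using measure_nonneg antisym by blast
  then show ?thesis
    using prob_Collect_eq_0[OF sets_no_past_event[unfolded no_past_event_def]] unfolding no_past_event_def
    by simp
qed

definition tau :: "'w \<Rightarrow> real" where
  "tau \<omega> = - Sup (Ev \<omega> \<inter> {..<0})"

lemma last_event_greatest:
  assumes \<omega>: "\<omega> \<in> space M" and ne: "Ev \<omega> \<inter> {..<0} \<noteq> {}"
  shows "Sup (Ev \<omega> \<inter> {..<0}) \<in> Ev \<omega>" "Sup (Ev \<omega> \<inter> {..<0}) < 0"
    and "\<And>e. e \<in> Ev \<omega> \<Longrightarrow> e < 0 \<Longrightarrow> e \<le> Sup (Ev \<omega> \<inter> {..<0})"
proof -
  obtain e0 where e0: "e0 \<in> Ev \<omega>" "e0 < 0" using ne by auto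
  define F where "F = Ev \<omega> \<inter> {e0..<0}"
  have "finite F" unfolding F_def by (rule finite_subset[OF _ finite_events_Icc[OF \<omega>, of e0 0]]) auto
  moreover have "F \<noteq> {}" unfolding F_def using e0 by auto
  ultimately have max: "Max F \<in> F" "\<And>e. e \<in> F \<Longrightarrow> e \<le> Max F" by simp_all
  have sup_eq: "Sup (Ev \<omega> \<inter> {..<0}) = Max F"
  proof (rule cSup_eq_maximum)
    show "Max F \<in> Ev \<omega> \<inter> {..<0}" using max(1) unfolding F_def by auto
    show "e \<le> Max F" if "e \<in> Ev \<omega> \<inter> {..<0}" for e
    proof (cases "e0 \<le> e")
      case True then show ?thesis using that max(2) unfolding F_def by auto
    next
      case False then show ?thesis using max(1) unfolding F_def by auto
    qed
  qed
  then show "Sup (Ev \<omega> \<inter> {..<0}) \<in> Ev \<omega>" "Sup (Ev \<omega> \<inter> {..<0}) < 0"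
    using max(1) unfolding F_def by auto
  show "e \<le> Sup (Ev \<omega> \<inter> {..<0})" if "e \<in> Ev \<omega>" "e < 0" for e
  proof (cases "e0 \<le> e")
    case True then show ?thesis using that max(2) unfolding sup_eq F_def by auto
  next
    case False then show ?thesis using max(1) unfolding sup_eq F_def by auto
  qed
qed

lemma tau_le_iff:
  assumes \<omega>: "\<omega> \<in> space M" and ne: "Ev \<omega> \<inter> {..<0} \<noteq> {}"
  shows "tau \<omega> \<le> t \<longleftrightarrow> \<omega> \<in> past_window t"
proof
  assume "tau \<omega> \<le> t"
  then have "- t \<le> Sup (Ev \<omega> \<inter> {..<0})" unfolding tau_def by simp
  then show "\<omega> \<in> past_window t" unfolding past_window_def using \<omega> last_event_greatest(1,2)[OF \<omega> ne] by auto
next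
  assume "\<omega> \<in> past_window t"
  then obtain e where "e \<in> Ev \<omega>" "-t \<le> e" "e < 0" unfolding past_window_def by auto
  then have "-t \<le> Sup (Ev \<omega> \<inter> {..<0})" using last_event_greatest(3)[OF \<omega> ne] by force
  then show "tau \<omega> \<le> t" unfolding tau_def by simp
qed

text \<open>Without past events \<open>tau\<close> is the junk value \<open>- Sup {}\<close>, which only affects a null set.\<close>
lemma tau_measurable [measurable]: "tau \<in> borel_measurable M"
proof (rule borel_measurableI_le)
  fix t
  have "tau \<omega> \<le> t \<longleftrightarrow> \<omega> \<in> past_window t \<union> (if - Sup ({}::real set) \<le> t then no_past_event else {})"
    if \<omega>: "\<omega> \<in> space M" for \<omega>
  proof (cases "Ev \<omega> \<inter> {..<0} = {}")
    case True
    then show ?thesis using \<omega> unfolding tau_def past_window_def no_past_event_def by auto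
  next
    case False
    then show ?thesis using \<omega> tau_le_iff unfolding no_past_event_def by auto
  qed
  then have "{\<omega>\<in>space M. tau \<omega> \<le> t} = past_window t \<union> (if - Sup ({}::real set) \<le> t then no_past_event else {})"
    using sets.sets_into_space[OF sets_past_window] sets.sets_into_space[OF sets_no_past_event] by auto
  then show "{\<omega>\<in>space M. tau \<omega> \<le> t} \<in> sets M"
    using sets_past_window sets_no_past_event by auto
qed

lemma measure_past_window: "measure M (past_window a) = tau_cdf a"
proof (cases "0 \<le> a")
  case False
  then have "past_window a = {}" unfolding past_window_def by auto
  then show ?thesis using False unfolding tau_cdf_def by simp
next
  case True
  have "AE \<omega> in M. \<omega> \<in> past_window a \<longleftrightarrow> \<omega> \<in> {\<omega>\<in>space M. cnt Ev (-a) 0 \<omega> \<noteq> 0}"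
    using AE_no_event_at[of "-a"] AE_no_event_at[of 0] AE_space
  proof eventually_elim
    case (elim \<omega>)
    then have "Ev \<omega> \<inter> {-a..<0} = Ev \<omega> \<inter> {-a<..0}" by (auto simp: le_less)
    then show ?case using cnt_eq_0_iff[of \<omega> "-a" 0] elim unfolding past_window_def by auto
  qed
  then have "measure M (past_window a) = measure M {\<omega>\<in>space M. cnt Ev (-a) 0 \<omega> \<noteq> 0}"
    using sets_past_window sets_cnt by (intro measure_eq_AE) auto
  also have "\<dots> = 1 - measure M {\<omega>\<in>space M. cnt Ev (-a) 0 \<omega> = 0}"
  proof -
    have "{\<omega>\<in>space M. cnt Ev (-a) 0 \<omega> \<noteq> 0} = space M - {\<omega>\<in>space M. cnt Ev (-a) 0 \<omega> = 0}" by auto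
    then show ?thesis using prob_compl[OF sets_cnt[of "\<lambda>k. k = 0" "-a" 0]] by simp
  qed
  also have "\<dots> = tau_cdf a"
    unfolding measure_no_event_before_0[OF True] tau_cdf_def input_prob_eq sum_divide_distrib using True
    by (simp add: mult_ac)
  finally show ?thesis .
qed

lemma distributed_tau: "distributed M lborel tau (\<lambda>t. ennreal (tau_density t))"
proof (rule distributedI_borel_atMost[where g = tau_cdf])
  show "tau \<in> borel_measurable M" by (rule tau_measurable)
  show "tau_density \<in> borel_measurable borel" unfolding tau_density_def survY_def by measurable
  show "AE t in lborel. 0 \<le> tau_density t" using tau_density_nonneg by simp
  show "(\<integral>\<^sup>+t. ennreal (tau_density t * indicator {..a} t) \<partial>lborel) = ennreal (tau_cdf a)" for a
    by (rule nn_integral_tau_density_atMost)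
  show "emeasure M {\<omega>\<in>space M. tau \<omega> \<le> a} = ennreal (tau_cdf a)" for a
  proof -
    have "AE \<omega> in M. \<omega> \<in> {\<omega>\<in>space M. tau \<omega> \<le> a} \<longleftrightarrow> \<omega> \<in> past_window a"
      using AE_some_past_event AE_space
    proof eventually_elim
      case (elim \<omega>)
      then show ?case using tau_le_iff by auto
    qed
    then have "measure M {\<omega>\<in>space M. tau \<omega> \<le> a} = measure M (past_window a)"
      using sets_past_window by (intro measure_eq_AE) auto
    then show ?thesis using measure_past_window emeasure_eq_measure by simp
  qed
qed

end

theorem lemma3:
  fixes pX :: "real pmf" and M :: "'w measure"
    and Xp :: "real \<Rightarrow> 'w \<Rightarrow> real" and Ev :: "'w \<Rightarrow> real set"
  assumes fin: "finite (set_pmf pX)"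
    and pos: "set_pmf pX \<subseteq> {0<..}"
    and chan: "poisson_feedback_channel pX M Xp Ev"
  defines "tau \<equiv> (\<lambda>\<omega>. - Sup (Ev \<omega> \<inter> {..<0}))"
  shows "(\<forall>t x. measure M {\<omega> \<in> space M. Xp t \<omega> = x}
            = ((1 / x) * pmf pX x) / (\<Sum>x'\<in>set_pmf pX. (1 / x') * pmf pX x'))
       \<and> (\<forall>t. prob_space.expectation M (\<lambda>\<omega>. Xp t \<omega> * ln (Xp t \<omega>))
            = measure_pmf.expectation pX ln / measure_pmf.expectation pX (\<lambda>x. 1 / x))
       \<and> distributed M lborel tau
           (\<lambda>t. ennreal (if 0 \<le> t then (\<Sum>x\<in>set_pmf pX. exp (- t * x) * pmf pX x)
                                        / measure_pmf.expectation pX (\<lambda>x. 1 / x) else 0))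
       \<and> prob_space.expectation M (\<lambda>\<omega>. gfun pX (tau \<omega>) * ln (gfun pX (tau \<omega>)))
           = (1 - hY pX) / measure_pmf.expectation pX (\<lambda>x. 1 / x)"
proof -
  interpret P: poisson_feedback pX M Xp Ev
    using fin pos chan by unfold_locales
  have dist: "distributed M lborel tau (\<lambda>t. ennreal (P.tau_density t))"
    unfolding tau_def P.tau_def[symmetric] by (rule P.distributed_tau)
  have "measure M {\<omega> \<in> space M. Xp t \<omega> = x}
      = ((1 / x) * pmf pX x) / (\<Sum>x'\<in>set_pmf pX. (1 / x') * pmf pX x')" for t x
    using P.measure_Xp_eq P.input_prob_eq P.mean_inv_eq_sum by simp
  moreover note P.expectation_Xp_ln_Xp
  moreover note dist[unfolded P.tau_density_def P.survY_def]
  moreover note P.integral_gfun_ln_gfun[OF dist]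
  ultimately show ?thesis by blast
qed

end
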